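(* Let $X$ be a space with property A, $E$ a Banach space, $p\in(1,\infty)$ and $q$ its conjugate index. For each $n\in\mathbb{N}$ let $\{\phi_i^{(n)}\}_{i\in I_n}$ be a metric $p$-partition of unity on $X$ with $(n,1/n)$-variation, and define $M_n:\mathcal{A}^p_E(X)\to\mathcal{A}^p_E(X)$ by $M_n(A)=\sum_{i\in I_n}(\phi_i^{(n)})^{p/q}A\phi_i^{(n)}$ (strongly convergent sum). Then each $M_n$ is a well-defined linear map of norm one, and $M_n(A)\to A$ in norm as $n\to\infty$ for every $A\in\mathcal{A}^p_E(X)$.
   Context: A *space* is a metric space $(X,d)$ that is strongly discrete (the set $\{d(x,y):x,y\in X\}$ is a discrete subset of $\mathbb{R}$) and has bounded geometry (for every $r>0$, $\sup_{x\in X}|B(x;r)|<\infty$). $\ell^p_E(X)$ is the Banach space of $p$-summable functions $X\to E$; a bounded function $\phi:X\to\mathbb{C}$ acts by pointwise multiplication. A bounded operator $A$ has matrix entries $A_{xy}\in\mathcal{L}(E)$, $A_{xy}e=(A(\delta_ye))(x)$; a band operator is an $X\times X$ matrix with uniformly bounded entries and finite propagation $\sup\{d(x,y):A_{xy}\ne0\}$, acting by matrix multiplication; $\mathcal{A}^p_E(X)$ is the norm closure of the band operators in $\mathcal{L}(\ell^p_E(X))$. A metric $p$-partition of unity on $X$ is a family $\{\phi_i:X\to[0,1]\}_{i\in I}$ such that (i) there is $N$ with at most $N$ of the $\phi_i(x)$ nonzero for each $x$; (ii) $\sup_i\operatorname{diam}\{x:\phi_i(x)\ne0\}<\infty$;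 (iii) $\sum_i\phi_i(x)^p=1$ for all $x$. It has $(r,\epsilon)$-variation if $d(x,y)\le r$ implies $\sum_i|\phi_i(x)-\phi_i(y)|^p<\epsilon^p$. $X$ has property A if for all $r,\epsilon>0$ there is a metric $p$-partition of unity with $(r,\epsilon)$-variation (independent of $p\in[1,\infty)$). *)

theory Defs
  imports "HOL-Analysis.Analysis"
begin

text \<open>The space X is the whole type 'x (a metric space); the type is passed via an itself argument.\<close>

definition strongly_discrete :: "'x::metric_space itself \<Rightarrow> bool" where
  "strongly_discrete _ \<longleftrightarrow>
     (let D = {dist (x::'x) y | x y. True} in
       \<forall>t\<in>D. \<exists>e>0. \<forall>s\<in>D. \<bar>s - t\<bar> < e \<longrightarrow> s = t)"

definition bounded_geometry :: "'x::metric_space itself \<Rightarrow> bool" where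
  "bounded_geometry _ \<longleftrightarrow>
     (\<forall>r>0. \<exists>N::nat. \<forall>x::'x. finite (ball x r) \<and> card (ball x r) \<le> N)"

definition nz_support :: "'i set \<Rightarrow> ('i \<Rightarrow> 'x \<Rightarrow> real) \<Rightarrow> 'x \<Rightarrow> 'i set" where
  "nz_support I \<phi> x = {i\<in>I. \<phi> i x \<noteq> 0}"

definition metric_pu :: "real \<Rightarrow> 'i set \<Rightarrow> ('i \<Rightarrow> 'x::metric_space \<Rightarrow> real) \<Rightarrow> bool" where
  "metric_pu p I \<phi> \<longleftrightarrow>
     (\<forall>i\<in>I. \<forall>x. 0 \<le> \<phi> i x \<and> \<phi> i x \<le> 1) \<and>
     (\<exists>N::nat. \<forall>x. finite (nz_support I \<phi> x) \<and> card (nz_support I \<phi> x) \<le> N) \<and>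
     (\<exists>D. \<forall>i\<in>I. \<forall>x y. \<phi> i x \<noteq> 0 \<longrightarrow> \<phi> i y \<noteq> 0 \<longrightarrow> dist x y \<le> D) \<and>
     (\<forall>x. (\<Sum>i\<in>nz_support I \<phi> x. \<phi> i x powr p) = 1)"

definition has_variation ::
  "real \<Rightarrow> 'i set \<Rightarrow> ('i \<Rightarrow> 'x::metric_space \<Rightarrow> real) \<Rightarrow> real \<Rightarrow> real \<Rightarrow> bool" where
  "has_variation p I \<phi> r \<epsilon> \<longleftrightarrow>
     (\<forall>x y. dist x y \<le> r \<longrightarrow>
        (\<Sum>i\<in>nz_support I \<phi> x \<union> nz_support I \<phi> y. \<bar>\<phi> i x - \<phi> i y\<bar> powr p) < \<epsilon> powr p)"

text \<open>Index sets are taken inside 'x \<times> nat, which loses no generality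
  (identically zero members may be dropped, and each remaining member can be
  indexed by a point of its support together with a number below the bound N).\<close>

definition property_A :: "'x::metric_space itself \<Rightarrow> real \<Rightarrow> bool" where
  "property_A _ p \<longleftrightarrow>
     (\<forall>r>0. \<forall>\<epsilon>>0. \<exists>(I::('x \<times> nat) set) (\<phi>::('x \<times> nat) \<Rightarrow> 'x \<Rightarrow> real).
         metric_pu p I \<phi> \<and> has_variation p I \<phi> r \<epsilon>)"

definition lp :: "real \<Rightarrow> ('x \<Rightarrow> 'e::real_normed_vector) set" where
  "lp p = {f. (\<lambda>x. norm (f x) powr p) summable_on UNIV}"

definition lpnorm :: "real \<Rightarrow> ('x \<Rightarrow> 'e::real_normed_vector) \<Rightarrow> real" where
  "lpnorm p f = (\<Sum>\<^sub>\<infinity>x. norm (f x) powr p) powr (1/p)"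

text \<open>Bounded linear operators on l^p_E(X); only their values on l^p matter.\<close>
definition bdd_op :: "real \<Rightarrow> (('x \<Rightarrow> 'e::real_normed_vector) \<Rightarrow> ('x \<Rightarrow> 'e)) \<Rightarrow> bool" where
  "bdd_op p T \<longleftrightarrow>
     T ` lp p \<subseteq> lp p \<and>
     (\<forall>f\<in>lp p. \<forall>g\<in>lp p. T (\<lambda>x. f x + g x) = (\<lambda>x. T f x + T g x)) \<and>
     (\<forall>c. \<forall>f\<in>lp p. T (\<lambda>x. c *\<^sub>R f x) = (\<lambda>x. c *\<^sub>R T f x)) \<and>
     (\<exists>C. \<forall>f\<in>lp p. lpnorm p (T f) \<le> C * lpnorm p f)"

definition opnorm :: "real \<Rightarrow> (('x \<Rightarrow> 'e::real_normed_vector) \<Rightarrow> ('x \<Rightarrow> 'e)) \<Rightarrow> real" where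
  "opnorm p T = Sup {lpnorm p (T f) | f. f \<in> lp p \<and> lpnorm p f \<le> 1}"

definition band_op :: "real \<Rightarrow> (('x::metric_space \<Rightarrow> 'e::real_normed_vector) \<Rightarrow> ('x \<Rightarrow> 'e)) \<Rightarrow> bool" where
  "band_op p T \<longleftrightarrow>
     (\<exists>b :: 'x \<Rightarrow> 'x \<Rightarrow> ('e \<Rightarrow>\<^sub>L 'e).
        (\<exists>C. \<forall>x y. norm (b x y) \<le> C) \<and>
        (\<exists>R. \<forall>x y. b x y \<noteq> 0 \<longrightarrow> dist x y \<le> R) \<and>
        (\<forall>f\<in>lp p. T f = (\<lambda>x. \<Sum>y\<in>{y. b x y \<noteq> 0}. blinfun_apply (b x y) (f y))))"

text \<open>A^p_E(X): the operator-norm closure of the band operators.\<close>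
definition Ap :: "real \<Rightarrow> (('x::metric_space \<Rightarrow> 'e::real_normed_vector) \<Rightarrow> ('x \<Rightarrow> 'e)) set" where
  "Ap p = {T. bdd_op p T \<and>
              (\<forall>\<epsilon>>0. \<exists>B. band_op p B \<and> opnorm p (\<lambda>f x. T f x - B f x) < \<epsilon>)}"

definition Mterm :: "real \<Rightarrow> ('i \<Rightarrow> 'x \<Rightarrow> real) \<Rightarrow> (('x \<Rightarrow> 'e::real_normed_vector) \<Rightarrow> ('x \<Rightarrow> 'e))
     \<Rightarrow> 'i \<Rightarrow> ('x \<Rightarrow> 'e) \<Rightarrow> ('x \<Rightarrow> 'e)" where
  "Mterm r \<phi> A i f = (\<lambda>x. (\<phi> i x powr r) *\<^sub>R A (\<lambda>y. \<phi> i y *\<^sub>R f y) x)"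

text \<open>M(A) = sum_i phi_i^(p/q) A phi_i.  Pointwise only finitely many summands are
  nonzero; the strong (l^p-norm) convergence of the sum is part of the theorem.\<close>
definition Mop :: "real \<Rightarrow> 'i set \<Rightarrow> ('i \<Rightarrow> 'x \<Rightarrow> real) \<Rightarrow> (('x \<Rightarrow> 'e::real_normed_vector) \<Rightarrow> ('x \<Rightarrow> 'e))
     \<Rightarrow> (('x \<Rightarrow> 'e) \<Rightarrow> ('x \<Rightarrow> 'e))" where
  "Mop r I \<phi> A = (\<lambda>f x. \<Sum>i\<in>nz_support I \<phi> x. Mterm r \<phi> A i f x)"

end

(*
  Since 1/p + 1/q = 1 we have p/q = p - 1, and everything is done with the exponent p - 1.
  The proof rests on three estimates, each proved pointwise and then summed over X:

  For a single point x, Jensen's inequality for the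
    weights \<phi>_i(x)^p (which sum to 1) gives
      \<parallel>\<Sum>_i \<phi>_i(x)^(p-1) A(\<phi>_i f)(x)\<parallel>^p \<le> \<Sum>_i \<parallel>A(\<phi>_i f)(x)\<parallel>^p,
    and summing over x and i yields \<parallel>M(A) f\<parallel>^p \<le> \<parallel>A\<parallel>^p \<Sum>_i \<parallel>\<phi>_i f\<parallel>^p \<le> \<parallel>A\<parallel>^p \<parallel>f\<parallel>^p.
    The same bound applied to the tails of the series gives strong convergence, and
    M(id) = id together with linearity gives \<parallel>M\<parallel> = 1.
  * Band operators.  If B has matrix (b_xy) then M(B) has matrix (c_xy b_xy) with
    c_xy = \<Sum>_i \<phi>_i(x)^(p-1) \<phi>_i(y), so M(B) is again a band operator; since M is a
    contraction, M maps the closure A^p_E(X) of the band operators into itself.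
  * Convergence.  Jensen's inequality again bounds |c_xy - 1| by the (r,\<epsilon>)-variation, so
    M_n(B) - B is a band operator with small entries; by the Schur-type bound for band
    operators on spaces of bounded geometry it has small norm.  Approximating A by band
    operators B gives M_n(A) \<rightarrow> A.
*)
theory Submission
  imports Defs
begin

section \<open>Sums of p-th powers\<close>

text \<open>The p-th power of the l^p norm; most estimates are cleaner at this level.\<close>
definition psum :: "real \<Rightarrow> ('x \<Rightarrow> 'e::real_normed_vector) \<Rightarrow> real" where
  "psum p f = (\<Sum>\<^sub>\<infinity>x. norm (f x) powr p)"

lemma lpnorm_psum: "lpnorm p f = psum p f powr (1/p)"
  by (simp add: lpnorm_def psum_def)

lemma psum_nonneg: "0 \<le> psum p f"
  unfolding psum_def by (rule infsum_nonneg) simp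

lemma lpnorm_nonneg: "0 \<le> lpnorm p f"
  by (simp add: lpnorm_psum)

lemma psum_lpnorm: "p \<noteq> 0 \<Longrightarrow> psum p f = lpnorm p f powr p"
  using psum_nonneg[of p f] by (simp add: lpnorm_psum powr_powr)

lemma nonneg_summable_by_finite_sums:
  fixes g :: "'a \<Rightarrow> real"
  assumes "\<And>x. x \<in> A \<Longrightarrow> 0 \<le> g x" "\<And>F. finite F \<Longrightarrow> F \<subseteq> A \<Longrightarrow> sum g F \<le> B"
  shows "g summable_on A" "infsum g A \<le> B"
proof -
  have "bdd_above (sum g ` {F. F \<subseteq> A \<and> finite F})"
    using assms(2) by (intro bdd_aboveI2[where M=B]) auto
  then show *: "g summable_on A" using assms(1) nonneg_bdd_above_summable_on by blast
  show "infsum g A \<le> B" using * assms(2) by (rule infsum_le_finite_sums)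
qed

lemma infsum_finite_sum:
  fixes h :: "'i \<Rightarrow> 'a \<Rightarrow> real"
  assumes "finite G" "\<And>i. i \<in> G \<Longrightarrow> h i summable_on A"
  shows "(\<lambda>x. \<Sum>i\<in>G. h i x) summable_on A" "infsum (\<lambda>x. \<Sum>i\<in>G. h i x) A = (\<Sum>i\<in>G. infsum (h i) A)"
proof -
  have "(\<lambda>x. \<Sum>i\<in>G. h i x) summable_on A \<and> infsum (\<lambda>x. \<Sum>i\<in>G. h i x) A = (\<Sum>i\<in>G. infsum (h i) A)"
    using assms by (induction G rule: finite_induct) (auto simp: summable_on_add infsum_add)
  then show "(\<lambda>x. \<Sum>i\<in>G. h i x) summable_on A" "infsum (\<lambda>x. \<Sum>i\<in>G. h i x) A = (\<Sum>i\<in>G. infsum (h i) A)"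
    by auto
qed

lemma lp_finite_sum_le: "f \<in> lp p \<Longrightarrow> finite F \<Longrightarrow> (\<Sum>x\<in>F. norm (f x) powr p) \<le> psum p f"
  unfolding lp_def psum_def by (intro finite_sum_le_infsum) auto

lemma lp_by_finite_sums:
  assumes "\<And>F. finite F \<Longrightarrow> (\<Sum>x\<in>F. norm (f x) powr p) \<le> B"
  shows "f \<in> lp p" "psum p f \<le> B"
  using nonneg_summable_by_finite_sums[of UNIV "\<lambda>x. norm (f x) powr p" B] assms
  unfolding lp_def psum_def by auto

lemma lp_dominated:
  assumes "f \<in> lp p" "\<And>x. norm (g x) powr p \<le> c * norm (f x) powr p" "0 \<le> c"
  shows "g \<in> lp p" "psum p g \<le> c * psum p f"
proof -
  have "(\<Sum>x\<in>F. norm (g x) powr p) \<le> c * psum p f" if "finite F" for F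
  proof -
    have "(\<Sum>x\<in>F. norm (g x) powr p) \<le> c * (\<Sum>x\<in>F. norm (f x) powr p)"
      by (simp add: sum_distrib_left sum_mono assms(2))
    also have "\<dots> \<le> c * psum p f"
      using lp_finite_sum_le[OF assms(1) that] assms(3) by (intro mult_left_mono)
    finally show ?thesis .
  qed
  then show "g \<in> lp p" "psum p g \<le> c * psum p f" using lp_by_finite_sums by blast+
qed

lemma lp_cutoff:
  assumes "f \<in> lp p" "0 < p" "\<And>y. 0 \<le> \<psi> y \<and> \<psi> y \<le> 1"
  shows "(\<lambda>y. \<psi> y *\<^sub>R f y) \<in> lp p"
  using assms
  by (intro lp_dominated(1)[OF assms(1), of _ 1])
     (auto simp: powr_mult intro!: mult_left_le_one_le powr_le1)

lemma lp_scaleR: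
  assumes "f \<in> lp p"
  shows "(\<lambda>x. c *\<^sub>R f x) \<in> lp p" "psum p (\<lambda>x. c *\<^sub>R f x) = \<bar>c\<bar> powr p * psum p f"
proof -
  have eq: "(\<lambda>x. norm (c *\<^sub>R f x) powr p) = (\<lambda>x. \<bar>c\<bar> powr p * norm (f x) powr p)"
    by (simp add: powr_mult)
  have "(\<lambda>x. \<bar>c\<bar> powr p * norm (f x) powr p) summable_on UNIV"
    using assms unfolding lp_def by (auto intro: summable_on_cmult_right)
  then show "(\<lambda>x. c *\<^sub>R f x) \<in> lp p" unfolding lp_def mem_Collect_eq eq .
  show "psum p (\<lambda>x. c *\<^sub>R f x) = \<bar>c\<bar> powr p * psum p f"
    unfolding psum_def eq by (rule infsum_cmult_right')
qed

lemma lp_zero: "(\<lambda>x. 0) \<in> lp p" "psum p (\<lambda>x. 0::'e::real_normed_vector) = 0"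
  unfolding lp_def psum_def by auto

lemma psum_eq_0_imp_zero:
  assumes "f \<in> lp p" "psum p f = 0" "p \<noteq> 0"
  shows "f x = 0"
proof -
  have "norm (f x) powr p = 0"
    using assms unfolding lp_def psum_def by (intro nonneg_infsum_le_0D[of _ UNIV]) auto
  then show ?thesis by simp
qed

lemma norm_add_powr_le:
  fixes u v :: "'e::real_normed_vector"
  assumes "0 < p"
  shows "norm (u + v) powr p \<le> 2 powr p * (norm u powr p + norm v powr p)"
proof -
  have "norm (u + v) powr p \<le> (2 * max (norm u) (norm v)) powr p"
    using norm_triangle_ineq[of u v] assms by (intro powr_mono2) auto
  also have "\<dots> = 2 powr p * max (norm u) (norm v) powr p"
    by (subst powr_mult) auto
  also have "\<dots> \<le> 2 powr p * (norm u powr p + norm v powr p)"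
    by (intro mult_left_mono) (auto simp: max_def)
  finally show ?thesis .
qed

lemma lp_add:
  assumes "f \<in> lp p" "g \<in> lp p" "0 < p"
  shows "(\<lambda>x. f x + g x) \<in> lp p" "psum p (\<lambda>x. f x + g x) \<le> 2 powr p * (psum p f + psum p g)"
proof -
  have "(\<Sum>x\<in>F. norm (f x + g x) powr p) \<le> 2 powr p * (psum p f + psum p g)" if "finite F" for F
  proof -
    have "(\<Sum>x\<in>F. norm (f x + g x) powr p)
          \<le> (\<Sum>x\<in>F. 2 powr p * (norm (f x) powr p + norm (g x) powr p))"
      by (intro sum_mono norm_add_powr_le assms(3))
    also have "\<dots> = 2 powr p * ((\<Sum>x\<in>F. norm (f x) powr p) + (\<Sum>x\<in>F. norm (g x) powr p))"
      by (simp only: sum_distrib_left[symmetric] sum.distrib)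
    also have "\<dots> \<le> 2 powr p * (psum p f + psum p g)"
      using lp_finite_sum_le[OF assms(1) that] lp_finite_sum_le[OF assms(2) that]
      by (intro mult_left_mono) auto
    finally show ?thesis .
  qed
  then show "(\<lambda>x. f x + g x) \<in> lp p" "psum p (\<lambda>x. f x + g x) \<le> 2 powr p * (psum p f + psum p g)"
    using lp_by_finite_sums[of "\<lambda>x. f x + g x" p] by auto
qed

lemma lpnorm_scaleR:
  assumes "f \<in> lp p" "0 < p"
  shows "lpnorm p (\<lambda>x. c *\<^sub>R f x) = \<bar>c\<bar> * lpnorm p f"
  using assms lp_scaleR(2)[OF assms(1), of c] psum_nonneg[of p f]
  by (simp add: lpnorm_psum powr_mult powr_powr)

lemma lpnorm_zero: "lpnorm p (\<lambda>x. 0::'e::real_normed_vector) = 0"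
  by (simp add: lpnorm_psum lp_zero)

lemma lpnorm_le_from_psum:
  assumes "psum p g \<le> K * psum p f" "0 \<le> K" "0 < p"
  shows "lpnorm p g \<le> K powr (1/p) * lpnorm p f"
proof -
  have "lpnorm p g \<le> (K * psum p f) powr (1/p)" unfolding lpnorm_psum
    using assms psum_nonneg[of p g] by (intro powr_mono2) auto
  also have "\<dots> = K powr (1/p) * lpnorm p f" using assms psum_nonneg[of p f]
    by (simp add: lpnorm_psum powr_mult)
  finally show ?thesis .
qed

text \<open>A quasi-triangle inequality for the l^p norm; the constant is irrelevant for us.\<close>
lemma lpnorm_add_le:
  assumes "f \<in> lp p" "g \<in> lp p" "1 \<le> p"
  shows "lpnorm p (\<lambda>x. f x + g x) \<le> 4 * (lpnorm p f + lpnorm p g)"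
proof -
  define M where "M = max (lpnorm p f) (lpnorm p g)"
  have M0: "0 \<le> M" using lpnorm_nonneg[of p f] by (simp add: M_def)
  have bounds: "psum p f \<le> M powr p" "psum p g \<le> M powr p"
    using assms psum_lpnorm[of p f] psum_lpnorm[of p g] lpnorm_nonneg[of p f] lpnorm_nonneg[of p g]
    by (simp_all add: M_def powr_mono2)
  have "psum p (\<lambda>x. f x + g x) \<le> 2 powr p * (psum p f + psum p g)"
    using lp_add(2)[OF assms(1,2)] assms(3) by simp
  also have "\<dots> \<le> 2 powr p * (2 * M powr p)"
    using bounds by (intro mult_left_mono) auto
  also have "\<dots> \<le> 2 powr p * (2 powr p * M powr p)"
    using assms(3)
    by (intro mult_left_mono mult_right_mono) (auto intro: order.trans[OF _ powr_mono, of _ 2 1])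
  also have "\<dots> = (4 * M) powr p" using M0 powr_mult[of 2 2 p] by (simp add: powr_mult)
  finally have "lpnorm p (\<lambda>x. f x + g x) \<le> ((4 * M) powr p) powr (1/p)"
    unfolding lpnorm_psum using assms psum_nonneg by (intro powr_mono2) auto
  also have "\<dots> = 4 * M" using M0 assms by (simp add: powr_powr)
  also have "\<dots> \<le> 4 * (lpnorm p f + lpnorm p g)"
    using lpnorm_nonneg[of p f] lpnorm_nonneg[of p g] by (simp add: M_def)
  finally show ?thesis .
qed

lemma lp_diff:
  assumes "f \<in> lp p" "g \<in> lp p" "1 \<le> p"
  shows "(\<lambda>x. f x - g x) \<in> lp p" "lpnorm p (\<lambda>x. f x - g x) \<le> 4 * (lpnorm p f + lpnorm p g)"
proof -
  have g': "(\<lambda>x. (-1) *\<^sub>R g x) \<in> lp p" using lp_scaleR(1)[OF assms(2)] .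
  have e: "(\<lambda>x. f x + (-1) *\<^sub>R g x) = (\<lambda>x. f x - g x)" by auto
  show "(\<lambda>x. f x - g x) \<in> lp p" using lp_add(1)[OF assms(1) g'] assms(3) e by simp
  show "lpnorm p (\<lambda>x. f x - g x) \<le> 4 * (lpnorm p f + lpnorm p g)"
    using lpnorm_add_le[OF assms(1) g' assms(3)] lpnorm_scaleR[OF assms(2), of "-1"] assms(3) e
    by simp
qed

lemma lpnorm_minus_commute:
  assumes "(\<lambda>x. f x - g x) \<in> lp p" "0 < p"
  shows "lpnorm p (\<lambda>x. g x - f x) = lpnorm p (\<lambda>x. f x - g x)"
proof -
  have "(\<lambda>x. g x - f x) = (\<lambda>x. (-1) *\<^sub>R (f x - g x))" by auto
  then show ?thesis using lpnorm_scaleR[OF assms(1,2), of "-1"] by simp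
qed

section \<open>Bounded operators on l^p\<close>

definition op_bound :: "real \<Rightarrow> (('x \<Rightarrow> 'e::real_normed_vector) \<Rightarrow> ('x \<Rightarrow> 'e)) \<Rightarrow> real \<Rightarrow> bool" where
  "op_bound p T C \<longleftrightarrow> (\<forall>f\<in>lp p. T f \<in> lp p \<and> lpnorm p (T f) \<le> C * lpnorm p f)"

definition homogeneous :: "real \<Rightarrow> (('x \<Rightarrow> 'e::real_normed_vector) \<Rightarrow> ('x \<Rightarrow> 'e)) \<Rightarrow> bool" where
  "homogeneous p T \<longleftrightarrow> (\<forall>c. \<forall>f\<in>lp p. T (\<lambda>x. c *\<^sub>R f x) = (\<lambda>x. c *\<^sub>R T f x))"

lemma op_boundD:
  fixes T :: "('x \<Rightarrow> 'e::real_normed_vector) \<Rightarrow> ('x \<Rightarrow> 'e)"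
  assumes "op_bound p T C" "f \<in> lp p"
  shows "T f \<in> lp p" "lpnorm p (T f) \<le> C * lpnorm p f"
  using assms unfolding op_bound_def by auto

lemma opnorm_bdd_above:
  fixes T :: "('x \<Rightarrow> 'e::real_normed_vector) \<Rightarrow> ('x \<Rightarrow> 'e)"
  assumes "op_bound p T C"
  shows "bdd_above {lpnorm p (T f) | f. f \<in> lp p \<and> lpnorm p f \<le> 1}"
proof (rule bdd_aboveI[where M="\<bar>C\<bar>"], clarify)
  fix f :: "'x \<Rightarrow> 'e" assume f: "f \<in> lp p" "lpnorm p f \<le> 1"
  have "lpnorm p (T f) \<le> C * lpnorm p f" using op_boundD(2)[OF assms f(1)] .
  also have "\<dots> \<le> \<bar>C\<bar> * lpnorm p f" using lpnorm_nonneg[of p f] by (intro mult_right_mono) auto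
  also have "\<dots> \<le> \<bar>C\<bar>" using f by (intro mult_left_le) auto
  finally show "lpnorm p (T f) \<le> \<bar>C\<bar>" .
qed

lemma opnorm_le:
  fixes T :: "('x \<Rightarrow> 'e::real_normed_vector) \<Rightarrow> ('x \<Rightarrow> 'e)"
  assumes "op_bound p T C" "0 \<le> C"
  shows "opnorm p T \<le> C"
  unfolding opnorm_def
proof (rule cSup_least)
  have "lpnorm p (T (\<lambda>x. 0)) \<in> {lpnorm p (T f) |f. f \<in> lp p \<and> lpnorm p f \<le> 1}"
    by (intro CollectI exI[of _ "\<lambda>x. 0"]) (simp add: lp_zero lpnorm_zero)
  then show "{lpnorm p (T f) |f. f \<in> lp p \<and> lpnorm p f \<le> 1} \<noteq> {}" by blast
  fix y assume "y \<in> {lpnorm p (T f) |f. f \<in> lp p \<and> lpnorm p f \<le> 1}"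
  then obtain f where f: "f \<in> lp p" "lpnorm p f \<le> 1" "y = lpnorm p (T f)" by auto
  have "y \<le> C * lpnorm p f" using op_boundD(2)[OF assms(1) f(1)] f(3) by simp
  also have "\<dots> \<le> C" using f assms by (simp add: mult_left_le)
  finally show "y \<le> C" .
qed

lemma opnorm_ge:
  assumes "op_bound p T C" "f \<in> lp p" "lpnorm p f \<le> 1"
  shows "lpnorm p (T f) \<le> opnorm p T"
  unfolding opnorm_def using assms opnorm_bdd_above[OF assms(1)] by (intro cSup_upper) auto

lemma opnorm_nonneg:
  assumes "op_bound p T C"
  shows "0 \<le> opnorm p T"
  using opnorm_ge[OF assms lp_zero(1)] lpnorm_zero[of p] lpnorm_nonneg[of p "T (\<lambda>x. 0)"]
  by (metis order.trans zero_le_one)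

lemma op_bound_opnorm:
  fixes T :: "('x \<Rightarrow> 'e::real_normed_vector) \<Rightarrow> ('x \<Rightarrow> 'e)"
  assumes "op_bound p T C" "homogeneous p T" "0 < p"
  shows "op_bound p T (opnorm p T)"
  unfolding op_bound_def
proof (intro ballI conjI)
  fix f :: "'x \<Rightarrow> 'e" assume f: "f \<in> lp p"
  show Tf: "T f \<in> lp p" using op_boundD(1)[OF assms(1) f] .
  show "lpnorm p (T f) \<le> opnorm p T * lpnorm p f"
  proof (cases "lpnorm p f = 0")
    case True
    then have "f x = 0" for x
      using psum_lpnorm[of p f] psum_eq_0_imp_zero[OF f] assms(3) by auto
    then have "f = (\<lambda>x. 0 *\<^sub>R f x)" by auto
    then have "T f = (\<lambda>x. 0 *\<^sub>R T f x)" using assms(2) f unfolding homogeneous_def by metis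
    then show ?thesis using True by (simp add: lpnorm_zero)
  next
    case False
    define L where "L = lpnorm p f"
    have L: "L > 0" using False lpnorm_nonneg[of p f] by (simp add: L_def)
    have f': "(\<lambda>x. (1/L) *\<^sub>R f x) \<in> lp p" using lp_scaleR(1)[OF f] .
    have "lpnorm p (\<lambda>x. (1/L) *\<^sub>R f x) = 1" using lpnorm_scaleR[OF f assms(3)] L by (simp add: L_def)
    then have "lpnorm p (T (\<lambda>x. (1/L) *\<^sub>R f x)) \<le> opnorm p T"
      using opnorm_ge[OF assms(1) f'] by simp
    moreover have "T (\<lambda>x. (1/L) *\<^sub>R f x) = (\<lambda>x. (1/L) *\<^sub>R T f x)"
      using assms(2) f unfolding homogeneous_def by blast
    ultimately have "(1/L) * lpnorm p (T f) \<le> opnorm p T"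
      using lpnorm_scaleR[OF Tf assms(3), of "1/L"] L by simp
    then show ?thesis using L by (simp add: L_def field_simps)
  qed
qed

lemma op_bound_psum:
  assumes "op_bound p T c" "0 \<le> c" "0 < p" "g \<in> lp p"
  shows "psum p (T g) \<le> c powr p * psum p g"
proof -
  have "lpnorm p (T g) powr p \<le> (c * lpnorm p g) powr p"
    using assms op_boundD(2)[OF assms(1,4)] by (intro powr_mono2) (auto simp: lpnorm_nonneg)
  then show ?thesis
    using assms by (simp add: psum_lpnorm powr_mult lpnorm_nonneg)
qed

lemma op_bound_diff:
  fixes A B :: "('x \<Rightarrow> 'e::real_normed_vector) \<Rightarrow> ('x \<Rightarrow> 'e)"
  assumes "op_bound p A a" "op_bound p B b" "1 \<le> p"
  shows "op_bound p (\<lambda>f x. A f x - B f x) (4 * (a + b))"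
  unfolding op_bound_def
proof (intro ballI conjI)
  fix f :: "'x \<Rightarrow> 'e" assume f: "f \<in> lp p"
  note A = op_boundD[OF assms(1) f] and B = op_boundD[OF assms(2) f]
  show "(\<lambda>x. A f x - B f x) \<in> lp p" using lp_diff(1)[OF A(1) B(1) assms(3)] .
  show "lpnorm p (\<lambda>x. A f x - B f x) \<le> 4 * (a + b) * lpnorm p f"
    using lp_diff(2)[OF A(1) B(1) assms(3)] A(2) B(2) by (simp add: algebra_simps)
qed

lemma homogeneous_diff:
  assumes "homogeneous p A" "homogeneous p B"
  shows "homogeneous p (\<lambda>f x. A f x - B f x)"
  using assms unfolding homogeneous_def by (simp add: scaleR_right_diff_distrib)

lemma op_bound_zero: "op_bound p (\<lambda>f x. 0::'e::real_normed_vector) 0"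
  unfolding op_bound_def by (simp add: lp_zero lpnorm_zero)

lemma op_bound_id: "op_bound p (\<lambda>f. f) 1"
  unfolding op_bound_def by simp

lemma Ap_D:
  assumes "A \<in> Ap p" "0 < p"
  shows "op_bound p A (opnorm p A)" "homogeneous p A" "0 \<le> opnorm p A"
    "\<And>f g. f \<in> lp p \<Longrightarrow> g \<in> lp p \<Longrightarrow> A (\<lambda>x. f x + g x) = (\<lambda>x. A f x + A g x)"
proof -
  have bd: "bdd_op p A" using assms unfolding Ap_def by auto
  then obtain C where "\<forall>f\<in>lp p. lpnorm p (A f) \<le> C * lpnorm p f" unfolding bdd_op_def by auto
  then have b0: "op_bound p A C" using bd unfolding bdd_op_def op_bound_def by auto
  show h: "homogeneous p A" using bd unfolding bdd_op_def homogeneous_def by auto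
  show "op_bound p A (opnorm p A)" by (rule op_bound_opnorm[OF b0 h assms(2)])
  show "0 \<le> opnorm p A" by (rule opnorm_nonneg[OF b0])
  show "\<And>f g. f \<in> lp p \<Longrightarrow> g \<in> lp p \<Longrightarrow> A (\<lambda>x. f x + g x) = (\<lambda>x. A f x + A g x)"
    using bd unfolding bdd_op_def by auto
qed

lemma Ap_approx:
  assumes "A \<in> Ap p" "0 < \<epsilon>"
  obtains B where "band_op p B" "opnorm p (\<lambda>f x. A f x - B f x) < \<epsilon>"
  using assms unfolding Ap_def by blast

section \<open>Jensen's inequality for power means\<close>

text \<open>The library states convexity of x powr p only on the open half-line.\<close>
lemma powr_convex_nonneg:
  assumes "1 \<le> p"
  shows "convex_on {0..} (\<lambda>x::real. x powr p)"
proof (rule convex_onI)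
  show "convex {0::real..}" by (rule convex_real_interval)
  fix t x y :: real assume t: "0 < t" "t < 1" and xy: "x \<in> {0..}" "y \<in> {0..}"
  have shrink: "s powr p \<le> s" if "0 \<le> s" "s \<le> 1" for s :: real
    using powr_mono'[of 1 p s] that assms by simp
  show "((1 - t) *\<^sub>R x + t *\<^sub>R y) powr p \<le> (1 - t) * x powr p + t * y powr p"
  proof (cases "x = 0 \<or> y = 0")
    case True
    then consider "x = 0" | "y = 0" by blast
    then show ?thesis
    proof cases
      case 1
      have "(t * y) powr p = t powr p * y powr p" using t xy by (simp add: powr_mult)
      also have "\<dots> \<le> t * y powr p" using shrink[of t] t by (intro mult_right_mono) auto
      finally show ?thesis using 1 assms by simp
    next
      case 2
      have "((1-t) * x) powr p = (1-t) powr p * x powr p" using t xy by (simp add: powr_mult)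
      also have "\<dots> \<le> (1-t) * x powr p" using shrink[of "1-t"] t by (intro mult_right_mono) auto
      finally show ?thesis using 2 assms by simp
    qed
  next
    case False
    then have "x \<in> {0<..}" "y \<in> {0<..}" using xy by auto
    then show ?thesis using convex_onD[OF powr_convex[OF assms], of t x y] t by simp
  qed
qed

text \<open>Jensen's inequality in the form used throughout: for positive weights a_i with
  \<Sum> a_i^p \<le> 1 and nonnegative t_i,  (\<Sum> a_i^(p-1) t_i)^p \<le> \<Sum> t_i^p.  It is applied with
  a_i = \<phi>_i(x), the values of a p-partition of unity at one point.\<close>
lemma power_mean_le:
  fixes a t :: "'i \<Rightarrow> real"
  assumes K: "finite K" and a: "\<And>i. i \<in> K \<Longrightarrow> 0 < a i" and W1: "(\<Sum>i\<in>K. a i powr p) \<le> 1"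
    and t: "\<And>i. i \<in> K \<Longrightarrow> 0 \<le> t i" and p: "1 \<le> p"
  shows "(\<Sum>i\<in>K. a i powr (p-1) * t i) powr p \<le> (\<Sum>i\<in>K. t i powr p)"
proof (cases "K = {}")
  case True then show ?thesis using p by simp
next
  case False
  define W where "W = (\<Sum>i\<in>K. a i powr p)"
  have Wpos: "0 < W" unfolding W_def using False K a by (intro sum_pos) (auto, fastforce)
  define w where "w i = a i powr p / W" for i
  define u where "u i = t i / a i" for i
  have sw: "(\<Sum>i\<in>K. w i) = 1" using Wpos by (simp add: w_def W_def flip: sum_divide_distrib)
  have "a i powr (p-1) * t i = W * (w i * u i)" if "i \<in> K" for i
    using a[OF that] Wpos by (simp add: w_def u_def field_simps powr_diff)
  then have "(\<Sum>i\<in>K. a i powr (p-1) * t i) powr p = (W * (\<Sum>i\<in>K. w i * u i)) powr p"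
    by (simp add: sum_distrib_left)
  also have "\<dots> = W powr p * (\<Sum>i\<in>K. w i * u i) powr p"
    using Wpos a t by (simp add: powr_mult w_def u_def sum_nonneg)
  also have "\<dots> \<le> W powr p * (\<Sum>i\<in>K. w i * u i powr p)"
  proof -
    have "\<And>i. i \<in> K \<Longrightarrow> 0 \<le> w i" using a Wpos by (simp add: w_def)
    moreover have "\<And>i. i \<in> K \<Longrightarrow> u i \<in> {0..}" using a t by (simp add: u_def less_imp_le)
    ultimately show ?thesis
      using convex_on_sum[OF K False powr_convex_nonneg[OF p] sw] by (intro mult_left_mono) auto
  qed
  also have "\<dots> = W powr (p-1) * (\<Sum>i\<in>K. a i powr p * u i powr p)"
    using Wpos by (simp add: w_def sum_distrib_left powr_diff field_simps flip: sum_divide_distrib)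
  also have "\<dots> \<le> (\<Sum>i\<in>K. a i powr p * u i powr p)"
  proof -
    have "W powr (p-1) \<le> 1" using W1 Wpos p by (intro powr_le1) (auto simp: W_def)
    then show ?thesis by (intro mult_left_le_one_le sum_nonneg) auto
  qed
  also have "\<dots> = (\<Sum>i\<in>K. t i powr p)"
  proof (intro sum.cong refl)
    fix i assume i: "i \<in> K"
    show "a i powr p * u i powr p = t i powr p"
      using a[OF i] t[OF i] by (simp add: u_def flip: powr_mult)
  qed
  finally show ?thesis .
qed

section \<open>Band operators on spaces of bounded geometry\<close>

lemma sum_dependent_swap:
  assumes "finite X" "\<And>x. x \<in> X \<Longrightarrow> finite (N x)"
  shows "(\<Sum>x\<in>X. \<Sum>i\<in>N x. h x i) = (\<Sum>i\<in>(\<Union>x\<in>X. N x). \<Sum>x\<in>{x\<in>X. i \<in> N x}. h x i)"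
proof -
  have "(\<Sum>x\<in>X. \<Sum>i\<in>N x. h x i) = (\<Sum>x\<in>X. \<Sum>i\<in>{i\<in>(\<Union>x\<in>X. N x). i \<in> N x}. h x i)"
    by (intro sum.cong refl) auto
  also have "\<dots> = (\<Sum>i\<in>(\<Union>x\<in>X. N x). \<Sum>x\<in>{x\<in>X. i \<in> N x}. h x i)"
    using assms by (intro sum.swap_restrict) auto
  finally show ?thesis .
qed

lemma sum_powr_le_card:
  fixes t :: "'a \<Rightarrow> real"
  assumes "finite S" "card S \<le> K" "\<And>y. y \<in> S \<Longrightarrow> 0 \<le> t y" "0 < p"
  shows "(\<Sum>y\<in>S. t y) powr p \<le> real K powr p * (\<Sum>y\<in>S. t y powr p)"
proof (cases "S = {}")
  case True then show ?thesis by simp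
next
  case False
  define m where "m = Max (t ` S)"
  have "m \<in> t ` S" unfolding m_def using assms(1) False by (intro Max_in) auto
  then obtain y0 where y0: "y0 \<in> S" "m = t y0" by auto
  have m0: "0 \<le> m" using assms(3) y0 by simp
  have "(\<Sum>y\<in>S. t y) \<le> card S * m" using assms(1) sum_bounded_above[of S t m] by (simp add: m_def)
  also have "\<dots> \<le> K * m" using assms(2) m0 by (intro mult_right_mono) auto
  finally have "(\<Sum>y\<in>S. t y) powr p \<le> (K * m) powr p"
    using assms by (intro powr_mono2 sum_nonneg) auto
  also have "\<dots> = K powr p * m powr p" using m0 by (simp add: powr_mult)
  also have "\<dots> \<le> K powr p * (\<Sum>y\<in>S. t y powr p)"
    unfolding y0(2) using assms(1) y0(1) by (intro mult_left_mono member_le_sum) auto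
  finally show ?thesis .
qed

lemma bounded_geometry_cball:
  assumes "bounded_geometry TYPE('x::metric_space)"
  obtains K :: nat where "\<And>x::'x. finite (cball x R) \<and> card (cball x R) \<le> K"
proof -
  obtain N :: nat where N: "\<And>x::'x. finite (ball x (\<bar>R\<bar>+1)) \<and> card (ball x (\<bar>R\<bar>+1)) \<le> N"
    using assms unfolding bounded_geometry_def
    by (metis abs_ge_zero add_pos_nonneg less_numeral_extra(1) add.commute)
  have "cball x R \<subseteq> ball x (\<bar>R\<bar>+1)" for x :: 'x by auto
  then show ?thesis using N that by (meson card_mono finite_subset order.trans)
qed

lemma row_sum_powr_le:
  fixes d :: "'a \<Rightarrow> ('e::real_normed_vector \<Rightarrow>\<^sub>L 'e)"
  assumes S: "finite S" "card S \<le> K" and d: "\<And>y. y \<in> S \<Longrightarrow> norm (d y) \<le> \<delta>"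
    and \<delta>: "0 \<le> \<delta>" and p: "0 < p"
  shows "norm (\<Sum>y\<in>S. d y (v y)) powr p \<le> \<delta> powr p * real K powr p * (\<Sum>y\<in>S. norm (v y) powr p)"
proof -
  have "norm (\<Sum>y\<in>S. d y (v y)) \<le> (\<Sum>y\<in>S. \<delta> * norm (v y))"
    using d norm_blinfun[of "d _"]
    by (intro order.trans[OF norm_sum] sum_mono) (meson mult_right_mono norm_ge_zero order.trans)
  then have "norm (\<Sum>y\<in>S. d y (v y)) powr p \<le> (\<delta> * (\<Sum>y\<in>S. norm (v y))) powr p"
    using p by (intro powr_mono2) (auto simp: sum_distrib_left)
  also have "\<dots> = \<delta> powr p * (\<Sum>y\<in>S. norm (v y)) powr p"
    using \<delta> by (simp add: powr_mult sum_nonneg)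
  also have "\<dots> \<le> \<delta> powr p * (real K powr p * (\<Sum>y\<in>S. norm (v y) powr p))"
    using S p by (intro mult_left_mono sum_powr_le_card) auto
  finally show ?thesis by (simp add: mult.assoc)
qed

lemma band_matrix_lp:
  fixes d :: "'x::metric_space \<Rightarrow> 'x \<Rightarrow> ('e::real_normed_vector \<Rightarrow>\<^sub>L 'e)"
  assumes fin: "\<And>x::'x. finite (cball x R) \<and> card (cball x R) \<le> K"
    and S: "\<And>x. S x \<subseteq> cball x R"
    and d: "\<And>x y. y \<in> S x \<Longrightarrow> norm (d x y) \<le> \<delta>" and \<delta>: "0 \<le> \<delta>"
    and f: "f \<in> lp p" and p: "0 < p"
  shows "(\<lambda>x. \<Sum>y\<in>S x. d x y (f y)) \<in> lp p"
        "lpnorm p (\<lambda>x. \<Sum>y\<in>S x. d x y (f y)) \<le> \<delta> * real K powr (1 + 1/p) * lpnorm p f"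
proof -
  define g where "g y = norm (f y) powr p" for y
  have finS: "finite (S x)" for x using fin[of x] S[of x] finite_subset by blast
  have cardS: "card (S x) \<le> K" for x using fin[of x] S[of x] card_mono by (metis order.trans)
  have pointwise: "norm (\<Sum>y\<in>S x. d x y (f y)) powr p \<le> \<delta> powr p * real K powr p * (\<Sum>y\<in>S x. g y)"
    for x
    unfolding g_def using finS cardS d \<delta> p by (rule row_sum_powr_le)
  text \<open>Summing over finitely many x: each y lies in at most K of the sets S x.\<close>
  have columns: "(\<Sum>x\<in>F. \<Sum>y\<in>S x. g y) \<le> real K * psum p f" if F: "finite F" for F
  proof -
    define G where "G = (\<Union>x\<in>F. S x)"
    have G: "finite G" using F finS by (simp add: G_def)
    have "(\<Sum>x\<in>F. \<Sum>y\<in>S x. g y) = (\<Sum>y\<in>G. \<Sum>x\<in>{x\<in>F. y \<in> S x}. g y)"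
      unfolding G_def using F finS by (rule sum_dependent_swap)
    also have "\<dots> \<le> (\<Sum>y\<in>G. real K * g y)"
    proof (intro sum_mono)
      fix y
      have "{x\<in>F. y \<in> S x} \<subseteq> cball y R" using S by (auto simp: dist_commute subset_iff)
      then have "card {x\<in>F. y \<in> S x} \<le> K" using fin[of y] card_mono by (metis order.trans)
      then show "(\<Sum>x\<in>{x\<in>F. y \<in> S x}. g y) \<le> real K * g y"
        by (auto intro!: mult_right_mono simp: g_def)
    qed
    also have "\<dots> \<le> real K * psum p f"
      using lp_finite_sum_le[OF f G] by (simp add: g_def mult_left_mono flip: sum_distrib_left)
    finally show ?thesis .
  qed
  have "(\<Sum>x\<in>F. norm (\<Sum>y\<in>S x. d x y (f y)) powr p)
               \<le> (\<delta> powr p * real K powr p * real K) * psum p f" if "finite F" for F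
  proof -
    have "(\<Sum>x\<in>F. norm (\<Sum>y\<in>S x. d x y (f y)) powr p)
          \<le> \<delta> powr p * real K powr p * (\<Sum>x\<in>F. \<Sum>y\<in>S x. g y)"
      using sum_mono[OF pointwise] by (simp add: sum_distrib_left)
    also have "\<dots> \<le> \<delta> powr p * real K powr p * (real K * psum p f)"
      using columns[OF that] by (intro mult_left_mono) auto
    finally show ?thesis by (simp add: mult.assoc)
  qed
  note bound = lp_by_finite_sums[of "\<lambda>x. \<Sum>y\<in>S x. d x y (f y)" p, OF this]
  then show "(\<lambda>x. \<Sum>y\<in>S x. d x y (f y)) \<in> lp p" by blast
  have "lpnorm p (\<lambda>x. \<Sum>y\<in>S x. d x y (f y))
        \<le> (\<delta> powr p * real K powr p * real K) powr (1/p) * lpnorm p f"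
    using bound(2) p by (intro lpnorm_le_from_psum) auto
  also have "(\<delta> powr p * real K powr p * real K) powr (1/p) = \<delta> * real K powr (1 + 1/p)"
    using \<delta> p by (simp add: powr_mult powr_powr powr_add)
  finally show "lpnorm p (\<lambda>x. \<Sum>y\<in>S x. d x y (f y)) \<le> \<delta> * real K powr (1 + 1/p) * lpnorm p f" .
qed

locale band_matrix =
  fixes p :: real and b :: "'x::metric_space \<Rightarrow> 'x \<Rightarrow> ('e::real_normed_vector \<Rightarrow>\<^sub>L 'e)"
    and C R :: real and B :: "('x \<Rightarrow> 'e) \<Rightarrow> ('x \<Rightarrow> 'e)" and K :: nat
  assumes entry_bound: "\<And>x y. norm (b x y) \<le> C"
    and propagation: "\<And>x y. b x y \<noteq> 0 \<Longrightarrow> dist x y \<le> R"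
    and matrix_action: "\<And>f. f \<in> lp p \<Longrightarrow> B f = (\<lambda>x. \<Sum>y\<in>{y. b x y \<noteq> 0}. b x y (f y))"
    and ball_card: "\<And>x::'x. finite (cball x R) \<and> card (cball x R) \<le> K"
    and p_ge1: "1 \<le> p"
begin

lemma entry_bound_nonneg: "0 \<le> C"
  using entry_bound[of undefined undefined] norm_ge_zero order.trans by blast

lemma row_support: "{y. b x y \<noteq> 0} \<subseteq> cball x R"
  using propagation by (auto simp: mem_cball)

lemma row_support_finite: "finite {y. b x y \<noteq> 0}"
  using ball_card[of x] row_support finite_subset by blast

lemma band_op_bound: "op_bound p B (C * real K powr (1 + 1/p))"
  unfolding op_bound_def
proof (intro ballI conjI)
  fix f :: "'x \<Rightarrow> 'e" assume f: "f \<in> lp p"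
  note schur = band_matrix_lp[OF ball_card row_support _ entry_bound_nonneg f] 
  show "B f \<in> lp p" "lpnorm p (B f) \<le> C * real K powr (1 + 1/p) * lpnorm p f"
    using schur entry_bound p_ge1 matrix_action[OF f] by auto
qed

lemma band_homogeneous: "homogeneous p B"
  unfolding homogeneous_def
proof (intro allI ballI)
  fix c and f :: "'x \<Rightarrow> 'e" assume f: "f \<in> lp p"
  then have "(\<lambda>x. c *\<^sub>R f x) \<in> lp p" by (rule lp_scaleR)
  then show "B (\<lambda>x. c *\<^sub>R f x) = (\<lambda>x. c *\<^sub>R B f x)"
    using f by (simp add: matrix_action blinfun.scaleR_right scaleR_sum_right)
qed

end

lemma band_opE:
  fixes B :: "('x::metric_space \<Rightarrow> 'e::real_normed_vector) \<Rightarrow> ('x \<Rightarrow> 'e)"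
  assumes "band_op p B" "bounded_geometry TYPE('x)" "1 \<le> p"
  obtains b :: "'x \<Rightarrow> 'x \<Rightarrow> ('e \<Rightarrow>\<^sub>L 'e)" and C R K
  where "band_matrix p b C R B K"
proof -
  obtain b :: "'x \<Rightarrow> 'x \<Rightarrow> ('e \<Rightarrow>\<^sub>L 'e)" where
    b: "(\<exists>C. \<forall>x y. norm (b x y) \<le> C) \<and> (\<exists>R. \<forall>x y. b x y \<noteq> 0 \<longrightarrow> dist x y \<le> R) \<and>
        (\<forall>f\<in>lp p. B f = (\<lambda>x. \<Sum>y\<in>{y. b x y \<noteq> 0}. b x y (f y)))"
    using assms(1) unfolding band_op_def by blast
  then obtain C R where CR: "\<forall>x y. norm (b x y) \<le> C" "\<forall>x y. b x y \<noteq> 0 \<longrightarrow> dist x y \<le> R"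
    by blast
  obtain K where "\<And>x::'x. finite (cball x R) \<and> card (cball x R) \<le> K"
    using bounded_geometry_cball[OF assms(2)] by blast
  then have "band_matrix p b C R B K"
    using b CR assms(3) by unfold_locales auto
  then show thesis by (rule that)
qed

section \<open>The averaging maps\<close>

lemma Mop_linear_comb:
  "Mop r I \<phi> (\<lambda>g x. a *\<^sub>R A g x + b *\<^sub>R B g x) f = (\<lambda>x. a *\<^sub>R Mop r I \<phi> A f x + b *\<^sub>R Mop r I \<phi> B f x)"
  by (simp add: Mop_def Mterm_def scaleR_add_right sum.distrib scaleR_sum_right mult.commute)

lemma Mop_diff:
  "Mop r I \<phi> (\<lambda>g x. A g x - B g x) = (\<lambda>f x. Mop r I \<phi> A f x - Mop r I \<phi> B f x)"
  by (simp add: Mop_def Mterm_def scaleR_right_diff_distrib sum_subtractf)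

lemma powr_minus_one_mult: "0 < a \<Longrightarrow> a powr (p - 1) * a = a powr (p::real)"
  by (simp add: powr_diff)

locale pu_weights =
  fixes p :: real and I :: "'i set" and \<phi> :: "'i \<Rightarrow> 'x::metric_space \<Rightarrow> real"
  assumes p_ge1: "1 \<le> p"
    and range01: "\<And>i x. i \<in> I \<Longrightarrow> 0 \<le> \<phi> i x \<and> \<phi> i x \<le> 1"
    and finite_support: "\<And>x. finite (nz_support I \<phi> x)"
    and sum_powr_eq_1: "\<And>x. (\<Sum>i\<in>nz_support I \<phi> x. \<phi> i x powr p) = 1"
begin

lemma support_pos: "i \<in> nz_support I \<phi> x \<Longrightarrow> 0 < \<phi> i x"
  using range01[of i x] by (auto simp: nz_support_def order_less_le)

lemma sum_powr_le_1:
  assumes "finite G" "G \<subseteq> I"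
  shows "(\<Sum>i\<in>G. \<phi> i y powr p) \<le> 1"
proof -
  have "(\<Sum>i\<in>G. \<phi> i y powr p) = (\<Sum>i\<in>G \<inter> nz_support I \<phi> y. \<phi> i y powr p)"
    using assms by (intro sum.mono_neutral_right) (auto simp: nz_support_def)
  also have "\<dots> \<le> (\<Sum>i\<in>nz_support I \<phi> y. \<phi> i y powr p)"
    using finite_support[of y] by (intro sum_mono2) auto
  finally show ?thesis using sum_powr_eq_1[of y] by simp
qed

lemma cutoff_lp: "i \<in> I \<Longrightarrow> f \<in> lp p \<Longrightarrow> (\<lambda>y. \<phi> i y *\<^sub>R f y) \<in> lp p"
  using range01[of i] p_ge1 by (intro lp_cutoff) auto

lemma cutoff_psum_sum:
  assumes f: "f \<in> lp p" and G: "finite G" "G \<subseteq> I"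
  shows "(\<Sum>i\<in>G. psum p (\<lambda>y. \<phi> i y *\<^sub>R f y)) \<le> psum p f"
proof -
  have eq: "(\<lambda>y. norm (\<phi> i y *\<^sub>R f y) powr p) = (\<lambda>y. \<phi> i y powr p * norm (f y) powr p)"
    if "i \<in> I" for i
    using range01[OF that] by (auto simp: powr_mult)
  have summable: "(\<lambda>y. \<phi> i y powr p * norm (f y) powr p) summable_on UNIV" if "i \<in> G" for i
    using cutoff_lp[of i f] that G f eq[of i] unfolding lp_def by auto
  have psum_eq: "psum p (\<lambda>y. \<phi> i y *\<^sub>R f y) = (\<Sum>\<^sub>\<infinity>y. \<phi> i y powr p * norm (f y) powr p)"
    if "i \<in> G" for i
    using that G unfolding psum_def by (subst eq) auto
  have "(\<Sum>i\<in>G. psum p (\<lambda>y. \<phi> i y *\<^sub>R f y))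
        = (\<Sum>i\<in>G. \<Sum>\<^sub>\<infinity>y. \<phi> i y powr p * norm (f y) powr p)"
    by (intro sum.cong refl psum_eq)
  also have "\<dots> = (\<Sum>\<^sub>\<infinity>y. \<Sum>i\<in>G. \<phi> i y powr p * norm (f y) powr p)"
    using infsum_finite_sum[OF G(1) summable] by simp
  also have "\<dots> \<le> (\<Sum>\<^sub>\<infinity>y. norm (f y) powr p)"
  proof (rule infsum_mono)
    show "(\<lambda>y. \<Sum>i\<in>G. \<phi> i y powr p * norm (f y) powr p) summable_on UNIV"
      using infsum_finite_sum[OF G(1) summable] by simp
    show "(\<lambda>y. norm (f y) powr p) summable_on UNIV" using f by (simp add: lp_def)
    show "(\<Sum>i\<in>G. \<phi> i y powr p * norm (f y) powr p) \<le> norm (f y) powr p" for y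
    proof -
      have "(\<Sum>i\<in>G. \<phi> i y powr p) * norm (f y) powr p \<le> norm (f y) powr p"
        using sum_powr_le_1[OF G, of y] by (intro mult_left_le_one_le sum_nonneg) auto
      then show ?thesis by (simp add: sum_distrib_right)
    qed
  qed
  finally show ?thesis by (simp add: psum_def)
qed

text \<open>M fixes the identity operator, because \<Sum>_i \<phi>_i^(p-1) \<phi>_i = \<Sum>_i \<phi>_i^p = 1.\<close>
lemma Mop_id: "Mop (p-1) I \<phi> (\<lambda>g. g) = (\<lambda>f::'x \<Rightarrow> 'e::real_normed_vector. f)"
proof (intro ext)
  fix f :: "'x \<Rightarrow> 'e" and x
  have "Mop (p-1) I \<phi> (\<lambda>g. g) f x = (\<Sum>i\<in>nz_support I \<phi> x. \<phi> i x powr p *\<^sub>R f x)"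
    unfolding Mop_def Mterm_def
    by (intro sum.cong refl) (simp add: support_pos powr_minus_one_mult)
  also have "\<dots> = f x" using sum_powr_eq_1[of x] by (simp flip: scaleR_sum_left)
  finally show "Mop (p-1) I \<phi> (\<lambda>g. g) f x = f x" .
qed

text \<open>Fix a bounded operator A and f \<in> l^p.  The i-th term of M(A) f is
  \<phi>_i^(p-1) A(\<phi>_i f); its "mass" is \<parallel>A(\<phi>_i f)\<parallel>^p, and these masses sum to at most
  \<parallel>A\<parallel>^p \<parallel>f\<parallel>^p.  Jensen's inequality bounds every tail of the series for M(A) f by the
  corresponding tail of the masses, which gives both boundedness and strong convergence.\<close>
context
  fixes A :: "('x \<Rightarrow> 'e::real_normed_vector) \<Rightarrow> ('x \<Rightarrow> 'e)" and c :: real and f :: "'x \<Rightarrow> 'e"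
  assumes A_bound: "op_bound p A c" and c_nonneg: "0 \<le> c" and f_lp: "f \<in> lp p"
begin

definition piece_mass :: "'i \<Rightarrow> real" where
  "piece_mass i = psum p (A (\<lambda>y. \<phi> i y *\<^sub>R f y))"

lemma piece_mass_nonneg: "0 \<le> piece_mass i"
  by (simp add: piece_mass_def psum_nonneg)

lemma piece_lp: "i \<in> I \<Longrightarrow> A (\<lambda>y. \<phi> i y *\<^sub>R f y) \<in> lp p"
  using op_boundD(1)[OF A_bound cutoff_lp[OF _ f_lp]] .

lemma piece_mass_summable:
  assumes "J \<subseteq> I"
  shows "piece_mass summable_on J" "infsum piece_mass J \<le> c powr p * psum p f"
proof -
  have "sum piece_mass G \<le> c powr p * psum p f" if G: "finite G" "G \<subseteq> J" for G
  proof -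
    have "sum piece_mass G \<le> (\<Sum>i\<in>G. c powr p * psum p (\<lambda>y. \<phi> i y *\<^sub>R f y))"
      using G assms p_ge1 c_nonneg
      by (intro sum_mono) (auto simp: piece_mass_def intro!: op_bound_psum[OF A_bound] cutoff_lp f_lp)
    also have "\<dots> \<le> c powr p * psum p f"
      using cutoff_psum_sum[OF f_lp G(1)] G(2) assms
      by (simp add: mult_left_mono flip: sum_distrib_left)
    finally show ?thesis .
  qed
  then show "piece_mass summable_on J" "infsum piece_mass J \<le> c powr p * psum p f"
    using nonneg_summable_by_finite_sums[of J piece_mass] piece_mass_nonneg by auto
qed

definition tail :: "'i set \<Rightarrow> 'x \<Rightarrow> 'e" where
  "tail F = (\<lambda>x. \<Sum>i\<in>nz_support I \<phi> x - F. \<phi> i x powr (p-1) *\<^sub>R A (\<lambda>y. \<phi> i y *\<^sub>R f y) x)"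

text \<open>Jensen's inequality at a single point x.\<close>
lemma tail_pointwise:
  "norm (tail F x) powr p \<le> (\<Sum>i\<in>nz_support I \<phi> x - F. norm (A (\<lambda>y. \<phi> i y *\<^sub>R f y) x) powr p)"
proof -
  let ?N = "nz_support I \<phi> x - F"
  have "norm (tail F x) \<le> (\<Sum>i\<in>?N. \<phi> i x powr (p-1) * norm (A (\<lambda>y. \<phi> i y *\<^sub>R f y) x))"
    unfolding tail_def by (rule order.trans[OF norm_sum]) simp
  then have "norm (tail F x) powr p
             \<le> (\<Sum>i\<in>?N. \<phi> i x powr (p-1) * norm (A (\<lambda>y. \<phi> i y *\<^sub>R f y) x)) powr p"
    using p_ge1 by (intro powr_mono2) auto
  also have "\<dots> \<le> (\<Sum>i\<in>?N. norm (A (\<lambda>y. \<phi> i y *\<^sub>R f y) x) powr p)"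
  proof (rule power_mean_le)
    show "finite ?N" using finite_support[of x] by auto
    show "(\<Sum>i\<in>?N. \<phi> i x powr p) \<le> 1"
      using sum_powr_le_1[of ?N x] finite_support[of x] by (auto simp: nz_support_def)
  qed (use support_pos p_ge1 in auto)
  finally show ?thesis .
qed

lemma tail_bound:
  assumes "F \<subseteq> I"
  shows "tail F \<in> lp p" "psum p (tail F) \<le> infsum piece_mass (I - F)"
proof -
  define H where "H i x = norm (A (\<lambda>y. \<phi> i y *\<^sub>R f y) x) powr p" for i x
  have "(\<Sum>x\<in>X. norm (tail F x) powr p) \<le> infsum piece_mass (I - F)" if X: "finite X" for X
  proof -
    define G where "G = (\<Union>x\<in>X. nz_support I \<phi> x - F)"
    have G: "finite G" "G \<subseteq> I - F" using X finite_support by (auto simp: G_def nz_support_def)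
    have "(\<Sum>x\<in>X. norm (tail F x) powr p) \<le> (\<Sum>x\<in>X. \<Sum>i\<in>nz_support I \<phi> x - F. H i x)"
      unfolding H_def by (intro sum_mono tail_pointwise)
    also have "\<dots> = (\<Sum>i\<in>G. \<Sum>x\<in>{x\<in>X. i \<in> nz_support I \<phi> x - F}. H i x)"
      unfolding G_def using X finite_support by (intro sum_dependent_swap) auto
    also have "\<dots> \<le> (\<Sum>i\<in>G. piece_mass i)"
    proof (rule sum_mono)
      fix i assume "i \<in> G"
      then have "A (\<lambda>y. \<phi> i y *\<^sub>R f y) \<in> lp p" using G piece_lp by blast
      then have "(\<Sum>x\<in>X. H i x) \<le> piece_mass i"
        unfolding H_def piece_mass_def using X by (rule lp_finite_sum_le)
      moreover have "(\<Sum>x\<in>{x\<in>X. i \<in> nz_support I \<phi> x - F}. H i x) \<le> (\<Sum>x\<in>X. H i x)"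
        using X by (intro sum_mono2) (auto simp: H_def)
      ultimately show "(\<Sum>x\<in>{x\<in>X. i \<in> nz_support I \<phi> x - F}. H i x) \<le> piece_mass i"
        by linarith
    qed
    also have "\<dots> \<le> infsum piece_mass (I - F)"
      using G piece_mass_summable[of "I - F"] piece_mass_nonneg
      by (intro finite_sum_le_infsum) auto
    finally show ?thesis .
  qed
  then show "tail F \<in> lp p" "psum p (tail F) \<le> infsum piece_mass (I - F)"
    using lp_by_finite_sums[of "tail F" p] by auto
qed

lemma Mop_minus_partial_sum:
  assumes "finite F" "F \<subseteq> I"
  shows "(\<lambda>x. Mop (p-1) I \<phi> A f x - (\<Sum>i\<in>F. Mterm (p-1) \<phi> A i f x)) = tail F"
proof
  fix x
  let ?N = "nz_support I \<phi> x"
  have "(\<Sum>i\<in>F. Mterm (p-1) \<phi> A i f x) = (\<Sum>i\<in>F \<inter> ?N. Mterm (p-1) \<phi> A i f x)"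
    using assms by (intro sum.mono_neutral_right) (auto simp: nz_support_def Mterm_def)
  moreover have "Mop (p-1) I \<phi> A f x
      = (\<Sum>i\<in>?N - F. Mterm (p-1) \<phi> A i f x) + (\<Sum>i\<in>F \<inter> ?N. Mterm (p-1) \<phi> A i f x)"
    unfolding Mop_def using finite_support[of x]
    by (metis Diff_Int2 Int_lower2 inf.idem sum.subset_diff)
  ultimately show "Mop (p-1) I \<phi> A f x - (\<Sum>i\<in>F. Mterm (p-1) \<phi> A i f x) = tail F x"
    by (simp add: tail_def Mterm_def)
qed

lemma Mop_eq_tail: "Mop (p-1) I \<phi> A f = tail {}"
  using Mop_minus_partial_sum[of "{}"] by simp

lemma Mop_apply_bound: "Mop (p-1) I \<phi> A f \<in> lp p" "lpnorm p (Mop (p-1) I \<phi> A f) \<le> c * lpnorm p f"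
proof -
  show "Mop (p-1) I \<phi> A f \<in> lp p" using tail_bound(1)[of "{}"] by (simp add: Mop_eq_tail)
  have "psum p (Mop (p-1) I \<phi> A f) \<le> c powr p * psum p f"
    using tail_bound(2)[of "{}"] piece_mass_summable[of I] by (simp add: Mop_eq_tail)
  then have "lpnorm p (Mop (p-1) I \<phi> A f) \<le> (c powr p) powr (1/p) * lpnorm p f"
    using p_ge1 by (intro lpnorm_le_from_psum) auto
  then show "lpnorm p (Mop (p-1) I \<phi> A f) \<le> c * lpnorm p f"
    using p_ge1 c_nonneg by (simp add: powr_powr)
qed

lemma Mop_strong_convergence:
  "((\<lambda>F. lpnorm p (\<lambda>x. Mop (p-1) I \<phi> A f x - (\<Sum>i\<in>F. Mterm (p-1) \<phi> A i f x))) \<longlongrightarrow> 0)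
     (finite_subsets_at_top I)"
proof (rule tendsto_sandwich[where f="\<lambda>_. 0"])
  have summable: "piece_mass summable_on I" using piece_mass_summable[of I] by simp
  have "(sum piece_mass \<longlongrightarrow> infsum piece_mass I) (finite_subsets_at_top I)"
    using summable by (simp add: summable_iff_has_sum_infsum has_sum_def)
  then have "((\<lambda>F. infsum piece_mass I - sum piece_mass F) \<longlongrightarrow> 0) (finite_subsets_at_top I)"
    by (auto intro: tendsto_eq_intros)
  moreover have "\<forall>\<^sub>F F in finite_subsets_at_top I. 0 \<le> infsum piece_mass I - sum piece_mass F"
    using summable piece_mass_nonneg
    by (intro eventually_finite_subsets_at_top_weakI) (auto intro: finite_sum_le_infsum)
  ultimately show "((\<lambda>F. (infsum piece_mass I - sum piece_mass F) powr (1/p)) \<longlongrightarrow> 0)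
                     (finite_subsets_at_top I)"
    using p_ge1 by (intro tendsto_zero_powrI) auto
  show "((\<lambda>_. 0::real) \<longlongrightarrow> 0) (finite_subsets_at_top I)" by simp
  show "\<forall>\<^sub>F F in finite_subsets_at_top I. 0 \<le> lpnorm p (\<lambda>x. Mop (p-1) I \<phi> A f x - (\<Sum>i\<in>F. Mterm (p-1) \<phi> A i f x))"
    by (simp add: lpnorm_nonneg)
  show "\<forall>\<^sub>F F in finite_subsets_at_top I.
          lpnorm p (\<lambda>x. Mop (p-1) I \<phi> A f x - (\<Sum>i\<in>F. Mterm (p-1) \<phi> A i f x))
            \<le> (infsum piece_mass I - sum piece_mass F) powr (1/p)"
  proof (intro eventually_finite_subsets_at_top_weakI)
    fix F assume F: "finite F" "F \<subseteq> I"
    have "infsum piece_mass (I - F) = infsum piece_mass I - sum piece_mass F"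
      using F summable by (subst infsum_Diff) auto
    then show "lpnorm p (\<lambda>x. Mop (p-1) I \<phi> A f x - (\<Sum>i\<in>F. Mterm (p-1) \<phi> A i f x))
                 \<le> (infsum piece_mass I - sum piece_mass F) powr (1/p)"
      unfolding Mop_minus_partial_sum[OF F] lpnorm_psum using tail_bound[OF F(2)] psum_nonneg p_ge1
      by (intro powr_mono2) auto
  qed
qed

end

lemma Mop_op_bound:
  assumes "op_bound p A c" "0 \<le> c"
  shows "op_bound p (Mop (p-1) I \<phi> A) c"
  using Mop_apply_bound[OF assms] unfolding op_bound_def by blast

end

section \<open>Averaging band operators\<close>

locale pu_band = pu_weights p I \<phi> + band_matrix p b C R B K
  for p :: real and I :: "'i set" and \<phi> :: "'i \<Rightarrow> 'x::metric_space \<Rightarrow> real"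
    and b :: "'x \<Rightarrow> 'x \<Rightarrow> ('e::real_normed_vector \<Rightarrow>\<^sub>L 'e)" and C R B K
begin

text \<open>M(B) is the matrix operator with entries kernel x y \<cdot> b x y.\<close>
definition kernel :: "'x \<Rightarrow> 'x \<Rightarrow> real" where
  "kernel x y = (\<Sum>i\<in>nz_support I \<phi> x. \<phi> i x powr (p-1) * \<phi> i y)"

lemma Mop_band_matrix:
  assumes f: "f \<in> lp p"
  shows "Mop (p-1) I \<phi> B f x = (\<Sum>y\<in>{y. b x y \<noteq> 0}. kernel x y *\<^sub>R b x y (f y))"
proof -
  have "Mop (p-1) I \<phi> B f x = (\<Sum>i\<in>nz_support I \<phi> x. \<phi> i x powr (p-1) *\<^sub>R
          (\<Sum>y\<in>{y. b x y \<noteq> 0}. \<phi> i y *\<^sub>R b x y (f y)))"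
    unfolding Mop_def Mterm_def
    by (intro sum.cong refl)
       (simp add: matrix_action[OF cutoff_lp[OF _ f]] nz_support_def blinfun.scaleR_right)
  also have "\<dots> = (\<Sum>y\<in>{y. b x y \<noteq> 0}. \<Sum>i\<in>nz_support I \<phi> x.
                     (\<phi> i x powr (p-1) * \<phi> i y) *\<^sub>R b x y (f y))"
    by (simp add: scaleR_sum_right sum.swap[of _ "nz_support I \<phi> x"])
  also have "\<dots> = (\<Sum>y\<in>{y. b x y \<noteq> 0}. kernel x y *\<^sub>R b x y (f y))"
    by (simp add: kernel_def scaleR_sum_left)
  finally show ?thesis .
qed

lemma kernel_bounds: "0 \<le> kernel x y" "kernel x y \<le> real (card (nz_support I \<phi> x))"
proof -
  have t: "0 \<le> \<phi> i x powr (p-1) * \<phi> i y \<and> \<phi> i x powr (p-1) * \<phi> i y \<le> 1"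
    if "i \<in> nz_support I \<phi> x" for i
    using that range01[of i x] range01[of i y] p_ge1
    by (auto simp: nz_support_def intro!: mult_le_one powr_le1)
  then show "0 \<le> kernel x y" unfolding kernel_def by (auto intro: sum_nonneg)
  have "kernel x y \<le> (\<Sum>i\<in>nz_support I \<phi> x. 1)" unfolding kernel_def using t by (intro sum_mono) auto
  then show "kernel x y \<le> real (card (nz_support I \<phi> x))" by simp
qed

lemma Mop_band_op:
  assumes N: "\<And>x. card (nz_support I \<phi> x) \<le> N"
  shows "band_op p (Mop (p-1) I \<phi> B)"
  unfolding band_op_def
proof (intro exI[of _ "\<lambda>x y. kernel x y *\<^sub>R b x y"] conjI)
  have "norm (kernel x y *\<^sub>R b x y) \<le> real N * C" for x y
    using kernel_bounds[of x y] N[of x] entry_bound[of x y] entry_bound_nonneg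
    by (simp add: mult_mono)
  then show "\<exists>C'. \<forall>x y. norm (kernel x y *\<^sub>R b x y) \<le> C'" by blast
  show "\<exists>R'. \<forall>x y. kernel x y *\<^sub>R b x y \<noteq> 0 \<longrightarrow> dist x y \<le> R'"
    using propagation by (intro exI[of _ R]) auto
  show "\<forall>f\<in>lp p. Mop (p-1) I \<phi> B f
          = (\<lambda>x. \<Sum>y\<in>{y. kernel x y *\<^sub>R b x y \<noteq> 0}. (kernel x y *\<^sub>R b x y) (f y))"
  proof (intro ballI ext)
    fix f :: "'x \<Rightarrow> 'e" and x assume f: "f \<in> lp p"
    have "(\<Sum>y\<in>{y. kernel x y *\<^sub>R b x y \<noteq> 0}. (kernel x y *\<^sub>R b x y) (f y))
        = (\<Sum>y\<in>{y. b x y \<noteq> 0}. (kernel x y *\<^sub>R b x y) (f y))"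
      using row_support_finite[of x] by (intro sum.mono_neutral_left) auto
    then show "Mop (p-1) I \<phi> B f x
          = (\<Sum>y\<in>{y. kernel x y *\<^sub>R b x y \<noteq> 0}. (kernel x y *\<^sub>R b x y) (f y))"
      using Mop_band_matrix[OF f, of x] by (simp add: blinfun.scaleR_left)
  qed
qed

text \<open>Small variation makes the kernel close to 1 on the support of b:
  kernel x y - 1 = \<Sum>_i \<phi>_i(x)^(p-1) (\<phi>_i(y) - \<phi>_i(x)), which Jensen's inequality bounds by
  the p-th root of the variation sum.\<close>
lemma kernel_close:
  assumes var: "has_variation p I \<phi> r \<epsilon>" and d: "dist x y \<le> r" and e: "0 < \<epsilon>"
  shows "\<bar>kernel x y - 1\<bar> < \<epsilon>"
proof -
  let ?N = "nz_support I \<phi> x"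
  let ?S = "\<Sum>i\<in>?N. \<phi> i x powr (p-1) * \<bar>\<phi> i y - \<phi> i x\<bar>"
  have "kernel x y - 1 = (\<Sum>i\<in>?N. \<phi> i x powr (p-1) * (\<phi> i y - \<phi> i x))"
  proof -
    have "(\<Sum>i\<in>?N. \<phi> i x powr (p-1) * \<phi> i x) = 1"
      using sum_powr_eq_1[of x] by (simp add: support_pos powr_minus_one_mult)
    then show ?thesis by (simp add: kernel_def right_diff_distrib sum_subtractf)
  qed
  then have "\<bar>kernel x y - 1\<bar> \<le> ?S"
    by (auto intro!: order.trans[OF sum_abs] sum_mono simp: abs_mult)
  have "?S powr p \<le> (\<Sum>i\<in>?N. \<bar>\<phi> i y - \<phi> i x\<bar> powr p)"
    using finite_support[of x] support_pos sum_powr_eq_1[of x] p_ge1 by (intro power_mean_le) auto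
  also have "\<dots> \<le> (\<Sum>i\<in>?N \<union> nz_support I \<phi> y. \<bar>\<phi> i x - \<phi> i y\<bar> powr p)"
    using finite_support[of x] finite_support[of y]
    by (simp add: abs_minus_commute sum_mono2)
  also have "\<dots> < \<epsilon> powr p"
    using var d unfolding has_variation_def by auto
  finally have lt: "?S powr p < \<epsilon> powr p" .
  show ?thesis
  proof (rule ccontr)
    assume "\<not> ?thesis"
    then have "\<epsilon> \<le> ?S" using \<open>\<bar>kernel x y - 1\<bar> \<le> ?S\<close> by simp
    then have "\<epsilon> powr p \<le> ?S powr p" using e p_ge1 by (intro powr_mono2) auto
    with lt show False by simp
  qed
qed

text \<open>Hence M(B) - B is a band operator with entries at most \<epsilon> C, so it has small norm.\<close>
lemma Mop_band_close:
  assumes var: "has_variation p I \<phi> r \<epsilon>" and "R \<le> r" and e: "0 < \<epsilon>"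
  shows "op_bound p (\<lambda>f x. Mop (p-1) I \<phi> B f x - B f x) (\<epsilon> * C * real K powr (1 + 1/p))"
  unfolding op_bound_def
proof (intro ballI)
  fix f :: "'x \<Rightarrow> 'e" assume f: "f \<in> lp p"
  define d where "d x y = (kernel x y - 1) *\<^sub>R b x y" for x y
  have eq: "(\<lambda>x. Mop (p-1) I \<phi> B f x - B f x) = (\<lambda>x. \<Sum>y\<in>{y. b x y \<noteq> 0}. d x y (f y))"
    unfolding Mop_band_matrix[OF f] matrix_action[OF f] d_def
    by (simp add: blinfun.scaleR_left blinfun.diff_left scaleR_diff_left sum_subtractf)
  have "norm (d x y) \<le> \<epsilon> * C" if "y \<in> {y. b x y \<noteq> 0}" for x y
  proof -
    have "dist x y \<le> r" using propagation that \<open>R \<le> r\<close> by force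
    then have "\<bar>kernel x y - 1\<bar> \<le> \<epsilon>" using kernel_close[OF var _ e] by (simp add: less_imp_le)
    then show ?thesis unfolding d_def using entry_bound[of x y] e by (simp add: mult_mono)
  qed
  note schur = band_matrix_lp[OF ball_card row_support this _ f]
  show "(\<lambda>x. Mop (p-1) I \<phi> B f x - B f x) \<in> lp p \<and>
        lpnorm p (\<lambda>x. Mop (p-1) I \<phi> B f x - B f x) \<le> \<epsilon> * C * real K powr (1 + 1/p) * lpnorm p f"
    unfolding eq using schur e entry_bound_nonneg p_ge1 by auto
qed

end

section \<open>The algebra A^p_E(X) and the norm of M\<close>

lemma id_band_op:
  assumes E: "\<exists>e::'e::real_normed_vector. e \<noteq> 0"
  shows "band_op p (\<lambda>f::'x::metric_space \<Rightarrow> 'e. f)"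
proof -
  define b :: "'x \<Rightarrow> 'x \<Rightarrow> ('e \<Rightarrow>\<^sub>L 'e)" where "b x y = (if x = y then id_blinfun else 0)" for x y
  have "(id_blinfun :: 'e \<Rightarrow>\<^sub>L 'e) \<noteq> 0"
    using E by (metis blinfun_apply_id_blinfun zero_blinfun.rep_eq)
  then have row: "{y. b x y \<noteq> 0} = {x}" for x by (auto simp: b_def)
  show ?thesis
    unfolding band_op_def
  proof (intro exI[of _ b] conjI)
    show "\<exists>C. \<forall>x y. norm (b x y) \<le> C" by (intro exI[of _ 1]) (auto simp: b_def norm_blinfun_id_le)
    show "\<exists>R. \<forall>x y. b x y \<noteq> 0 \<longrightarrow> dist x y \<le> R" by (intro exI[of _ 0]) (auto simp: b_def)
    show "\<forall>f\<in>lp p. f = (\<lambda>x. \<Sum>y\<in>{y. b x y \<noteq> 0}. b x y (f y))"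
    proof (intro ballI ext)
      fix f :: "'x \<Rightarrow> 'e" and x
      have "(\<Sum>y\<in>{y. b x y \<noteq> 0}. b x y (f y)) = b x x (f x)" unfolding row by simp
      then show "f x = (\<Sum>y\<in>{y. b x y \<noteq> 0}. b x y (f y))" by (simp add: b_def)
    qed
  qed
qed

text \<open>The identity belongs to A^p_E(X) (it is a band operator of propagation 0) and has norm 1.\<close>
lemma id_in_Ap:
  assumes E: "\<exists>e::'e::real_normed_vector. e \<noteq> 0"
  shows "(\<lambda>f. f) \<in> (Ap p :: (('x::metric_space \<Rightarrow> 'e) \<Rightarrow> ('x \<Rightarrow> 'e)) set)"
  unfolding Ap_def
proof (intro CollectI conjI allI impI)
  show "bdd_op p (\<lambda>f::'x \<Rightarrow> 'e. f)" unfolding bdd_op_def by (auto intro: exI[of _ 1])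
  fix \<epsilon> :: real assume "0 < \<epsilon>"
  moreover have "opnorm p (\<lambda>(f::'x \<Rightarrow> 'e) x. f x - f x) \<le> 0"
    using opnorm_le[OF op_bound_zero] by simp
  ultimately show "\<exists>B. band_op p B \<and> opnorm p (\<lambda>(f::'x \<Rightarrow> 'e) x. f x - B f x) < \<epsilon>"
    using id_band_op[OF E] by (intro exI[of _ "\<lambda>f. f"]) auto
qed

lemma opnorm_id:
  assumes E: "\<exists>e::'e::real_normed_vector. e \<noteq> 0" and p: "0 < p"
  shows "opnorm p (\<lambda>f::'x \<Rightarrow> 'e. f) = 1"
proof (rule antisym)
  show "opnorm p (\<lambda>f::'x \<Rightarrow> 'e. f) \<le> 1" by (rule opnorm_le[OF op_bound_id]) simp
  text \<open>A unit vector placed at a single point has norm 1.\<close>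
  obtain e0 :: 'e where e0: "e0 \<noteq> 0" using E by auto
  define x0 :: 'x where "x0 = undefined"
  define f0 :: "'x \<Rightarrow> 'e" where "f0 x = (if x = x0 then (1 / norm e0) *\<^sub>R e0 else 0)" for x
  have nf: "(\<lambda>x. norm (f0 x) powr p) = (\<lambda>x. if x = x0 then 1 else 0)"
    using e0 p by (auto simp: f0_def)
  have fb: "(\<Sum>x\<in>F. if x = x0 then 1 else 0::real) \<le> 1" for F
    by (cases "finite F") (auto simp: sum.delta)
  note nb = nonneg_summable_by_finite_sums[of UNIV "\<lambda>x. if x = x0 then 1 else 0::real", OF _ fb]
  have "(\<Sum>x\<in>{x0}. if x = x0 then 1 else 0::real) \<le> (\<Sum>\<^sub>\<infinity>x. if x = x0 then 1 else 0::real)"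
    using nb by (intro finite_sum_le_infsum) auto
  then have f0: "f0 \<in> lp p" "lpnorm p f0 = 1"
    unfolding lp_def lpnorm_psum psum_def mem_Collect_eq nf using nb by (auto intro: antisym)
  then show "1 \<le> opnorm p (\<lambda>f::'x \<Rightarrow> 'e. f)"
    using opnorm_ge[OF op_bound_id f0(1)] by simp
qed

context pu_weights
begin

lemma Mop_additive:
  fixes A :: "('x \<Rightarrow> 'e::real_normed_vector) \<Rightarrow> ('x \<Rightarrow> 'e)"
  assumes add: "\<And>f g. f \<in> lp p \<Longrightarrow> g \<in> lp p \<Longrightarrow> A (\<lambda>x. f x + g x) = (\<lambda>x. A f x + A g x)"
    and f: "f \<in> lp p" and g: "g \<in> lp p"
  shows "Mop (p-1) I \<phi> A (\<lambda>x. f x + g x) = (\<lambda>x. Mop (p-1) I \<phi> A f x + Mop (p-1) I \<phi> A g x)"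
proof -
  have "A (\<lambda>y. \<phi> i y *\<^sub>R f y + \<phi> i y *\<^sub>R g y)
        = (\<lambda>x. A (\<lambda>y. \<phi> i y *\<^sub>R f y) x + A (\<lambda>y. \<phi> i y *\<^sub>R g y) x)" if "i \<in> I" for i
    using add[OF cutoff_lp[OF that f] cutoff_lp[OF that g]] .
  then have term_add: "Mterm (p-1) \<phi> A i (\<lambda>x. f x + g x) x
                       = Mterm (p-1) \<phi> A i f x + Mterm (p-1) \<phi> A i g x" if "i \<in> I" for i x
    using that by (simp add: Mterm_def scaleR_add_right)
  show ?thesis
  proof
    fix x
    have "Mop (p-1) I \<phi> A (\<lambda>x. f x + g x) x
          = (\<Sum>i\<in>nz_support I \<phi> x. Mterm (p-1) \<phi> A i f x + Mterm (p-1) \<phi> A i g x)"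
      unfolding Mop_def by (intro sum.cong refl) (simp add: nz_support_def term_add)
    then show "Mop (p-1) I \<phi> A (\<lambda>x. f x + g x) x = Mop (p-1) I \<phi> A f x + Mop (p-1) I \<phi> A g x"
      by (simp add: Mop_def sum.distrib)
  qed
qed

lemma Mop_homogeneous:
  fixes A :: "('x \<Rightarrow> 'e::real_normed_vector) \<Rightarrow> ('x \<Rightarrow> 'e)"
  assumes "homogeneous p A"
  shows "homogeneous p (Mop (p-1) I \<phi> A)"
  unfolding homogeneous_def
proof (intro allI ballI)
  fix c and f :: "'x \<Rightarrow> 'e" assume f: "f \<in> lp p"
  have term_scale: "Mterm (p-1) \<phi> A i (\<lambda>x. c *\<^sub>R f x) x = c *\<^sub>R Mterm (p-1) \<phi> A i f x"
    if "i \<in> I" for i x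
  proof -
    have "\<forall>g\<in>lp p. A (\<lambda>x. c *\<^sub>R g x) = (\<lambda>x. c *\<^sub>R A g x)"
      using assms unfolding homogeneous_def by blast
    note scale = bspec[OF this cutoff_lp[OF that f]]
    have commute: "(\<lambda>y. \<phi> i y *\<^sub>R c *\<^sub>R f y) = (\<lambda>y. c *\<^sub>R \<phi> i y *\<^sub>R f y)"
      by (simp add: mult.commute)
    show ?thesis unfolding Mterm_def commute scale by (simp add: scaleR_left_commute)
  qed
  show "Mop (p-1) I \<phi> A (\<lambda>x. c *\<^sub>R f x) = (\<lambda>x. c *\<^sub>R Mop (p-1) I \<phi> A f x)"
    unfolding Mop_def scaleR_sum_right
    by (intro ext sum.cong refl) (simp add: nz_support_def term_scale)
qed

lemma Mop_bdd_op:
  fixes A :: "('x \<Rightarrow> 'e::real_normed_vector) \<Rightarrow> ('x \<Rightarrow> 'e)"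
  assumes A: "A \<in> Ap p"
  shows "bdd_op p (Mop (p-1) I \<phi> A)"
proof -
  have p: "0 < p" using p_ge1 by simp
  have bound: "op_bound p (Mop (p-1) I \<phi> A) (opnorm p A)"
    using Mop_op_bound[OF Ap_D(1,3)[OF A p]] .
  have add: "Mop (p-1) I \<phi> A (\<lambda>x. f x + g x) = (\<lambda>x. Mop (p-1) I \<phi> A f x + Mop (p-1) I \<phi> A g x)"
    if "f \<in> lp p" "g \<in> lp p" for f g
    using Mop_additive[of A f g] Ap_D(4)[OF A p] that by blast
  have "homogeneous p (Mop (p-1) I \<phi> A)" using Mop_homogeneous[OF Ap_D(2)[OF A p]] .
  then show ?thesis
    using bound add unfolding bdd_op_def op_bound_def homogeneous_def by blast
qed

end

lemma Ap_minus_band_bound: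
  assumes A: "A \<in> Ap p" and B: "band_matrix p b C R B K"
  shows "op_bound p (\<lambda>f x. A f x - B f x) (opnorm p (\<lambda>f x. A f x - B f x))"
proof -
  have p1: "1 \<le> p" using band_matrix.p_ge1[OF B] .
  then have p0: "0 < p" by simp
  show ?thesis
    using op_bound_opnorm[OF op_bound_diff[OF Ap_D(1)[OF A p0] band_matrix.band_op_bound[OF B] p1]
            homogeneous_diff[OF Ap_D(2)[OF A p0] band_matrix.band_homogeneous[OF B]] p0] .
qed

context pu_weights
begin

text \<open>Since M is a contraction and maps band operators to band operators, it maps their
  closure A^p_E(X) into itself.\<close>
lemma Mop_in_Ap:
  assumes A: "A \<in> Ap p" and bg: "bounded_geometry TYPE('x)"
    and N: "\<And>x. card (nz_support I \<phi> x) \<le> N"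
  shows "Mop (p-1) I \<phi> A \<in> Ap p"
  unfolding Ap_def
proof (intro CollectI conjI allI impI Mop_bdd_op[OF A])
  fix \<epsilon> :: real assume "0 < \<epsilon>"
  then obtain B where B: "band_op p B" "opnorm p (\<lambda>f x. A f x - B f x) < \<epsilon>"
    using Ap_approx[OF A] by blast
  obtain b C R K where bm: "band_matrix p b C R B K" using band_opE[OF B(1) bg p_ge1] .
  interpret pu_band p I \<phi> b C R B K by (rule pu_band.intro[OF pu_weights_axioms bm])
  note AB = Ap_minus_band_bound[OF A bm]
  have "opnorm p (\<lambda>f x. Mop (p-1) I \<phi> A f x - Mop (p-1) I \<phi> B f x)
        \<le> opnorm p (\<lambda>f x. A f x - B f x)"
    unfolding Mop_diff[symmetric] using opnorm_nonneg[OF AB]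
    by (intro opnorm_le Mop_op_bound[OF AB])
  then show "\<exists>B'. band_op p B' \<and> opnorm p (\<lambda>f x. Mop (p-1) I \<phi> A f x - B' f x) < \<epsilon>"
    using Mop_band_op[OF N] B(2) by (intro exI[of _ "Mop (p-1) I \<phi> B"]) auto
qed

text \<open>M has norm one on A^p_E(X): it is a contraction and fixes the identity.\<close>
lemma Mop_norm_one:
  assumes E: "\<exists>e::'e::real_normed_vector. e \<noteq> 0"
  shows "Sup {opnorm p (Mop (p-1) I \<phi> A) | A.
                A \<in> (Ap p :: (('x \<Rightarrow> 'e) \<Rightarrow> ('x \<Rightarrow> 'e)) set) \<and> opnorm p A \<le> 1} = 1"
proof (rule cSup_eq_maximum)
  have p: "0 < p" using p_ge1 by simp
  show "1 \<in> {opnorm p (Mop (p-1) I \<phi> A) | A.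
               A \<in> (Ap p :: (('x \<Rightarrow> 'e) \<Rightarrow> ('x \<Rightarrow> 'e)) set) \<and> opnorm p A \<le> 1}"
    using id_in_Ap[OF E, where 'x='x] opnorm_id[OF E p, where 'x='x] Mop_id[where 'e='e]
    by (intro CollectI exI[of _ "\<lambda>g::'x \<Rightarrow> 'e. g"]) auto
  fix y assume "y \<in> {opnorm p (Mop (p-1) I \<phi> A) | A.
                       A \<in> (Ap p :: (('x \<Rightarrow> 'e) \<Rightarrow> ('x \<Rightarrow> 'e)) set) \<and> opnorm p A \<le> 1}"
  then obtain A :: "('x \<Rightarrow> 'e) \<Rightarrow> ('x \<Rightarrow> 'e)"
    where A: "A \<in> Ap p" "opnorm p A \<le> 1" "y = opnorm p (Mop (p-1) I \<phi> A)"
    by auto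
  have "y \<le> opnorm p A"
    unfolding A(3) by (intro opnorm_le Mop_op_bound Ap_D[OF A(1) p])
  then show "y \<le> 1" using A(2) by simp
qed

lemma averaging_map_properties:
  assumes bg: "bounded_geometry TYPE('x)" and E: "\<exists>e::'e::real_normed_vector. e \<noteq> 0"
    and N: "\<exists>N. \<forall>x. card (nz_support I \<phi> x) \<le> N"
  shows "(\<forall>A\<in>(Ap p :: (('x \<Rightarrow> 'e) \<Rightarrow> ('x \<Rightarrow> 'e)) set).
            (\<forall>f\<in>lp p.
               ((\<lambda>F. lpnorm p (\<lambda>x. Mop (p-1) I \<phi> A f x - (\<Sum>i\<in>F. Mterm (p-1) \<phi> A i f x))) \<longlongrightarrow> 0)
               (finite_subsets_at_top I))
          \<and> Mop (p-1) I \<phi> A \<in> Ap p)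
       \<and> (\<forall>A\<in>(Ap p :: (('x \<Rightarrow> 'e) \<Rightarrow> ('x \<Rightarrow> 'e)) set). \<forall>B\<in>Ap p. \<forall>a b::real. \<forall>f\<in>lp p.
            Mop (p-1) I \<phi> (\<lambda>g x. a *\<^sub>R A g x + b *\<^sub>R B g x) f
              = (\<lambda>x. a *\<^sub>R Mop (p-1) I \<phi> A f x + b *\<^sub>R Mop (p-1) I \<phi> B f x))
       \<and> Sup {opnorm p (Mop (p-1) I \<phi> A) | A.
                A \<in> (Ap p :: (('x \<Rightarrow> 'e) \<Rightarrow> ('x \<Rightarrow> 'e)) set) \<and> opnorm p A \<le> 1} = 1"
proof -
  have p: "0 < p" using p_ge1 by simp
  obtain N where "\<And>x. card (nz_support I \<phi> x) \<le> N" using N by blast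
  then show ?thesis
    using Mop_strong_convergence[OF Ap_D(1,3)[OF _ p]] Mop_in_Ap[OF _ bg] Mop_linear_comb
          Mop_norm_one[OF E]
    by blast
qed

text \<open>The triangle inequality M(A) - A = M(A - B) + (M(B) - B) + (B - A), with M a contraction.\<close>
lemma Mop_minus_id_bound:
  fixes A B :: "('x \<Rightarrow> 'e::real_normed_vector) \<Rightarrow> ('x \<Rightarrow> 'e)"
  assumes AB: "op_bound p (\<lambda>f x. A f x - B f x) \<nu>" "0 \<le> \<nu>"
    and MB: "op_bound p (\<lambda>f x. Mop (p-1) I \<phi> B f x - B f x) \<eta>"
  shows "op_bound p (\<lambda>f x. Mop (p-1) I \<phi> A f x - A f x) (20 * \<nu> + 16 * \<eta>)"
  unfolding op_bound_def
proof (intro ballI)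
  fix f :: "'x \<Rightarrow> 'e" assume f: "f \<in> lp p"
  have p: "0 < p" using p_ge1 by simp
  define u1 where "u1 = Mop (p-1) I \<phi> (\<lambda>f x. A f x - B f x) f"
  define u2 where "u2 = (\<lambda>x. Mop (p-1) I \<phi> B f x - B f x)"
  define u3 where "u3 = (\<lambda>x. B f x - A f x)"
  have u1: "u1 \<in> lp p" "lpnorm p u1 \<le> \<nu> * lpnorm p f"
    using op_boundD[OF Mop_op_bound[OF AB] f] by (simp_all add: u1_def)
  have u2: "u2 \<in> lp p" "lpnorm p u2 \<le> \<eta> * lpnorm p f"
    using op_boundD[OF MB f] by (simp_all add: u2_def)
  note ABf = op_boundD[OF AB(1) f]
  have u3: "u3 \<in> lp p" "lpnorm p u3 \<le> \<nu> * lpnorm p f"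
    using lpnorm_minus_commute[OF ABf(1) p] ABf lp_scaleR(1)[OF ABf(1), of "-1"]
    by (auto simp: u3_def)
  have eq: "(\<lambda>x. Mop (p-1) I \<phi> A f x - A f x) = (\<lambda>x. u1 x + (u2 x + u3 x))"
    by (auto simp: u1_def u2_def u3_def Mop_diff)
  have u23: "(\<lambda>x. u2 x + u3 x) \<in> lp p" "lpnorm p (\<lambda>x. u2 x + u3 x) \<le> 4 * (lpnorm p u2 + lpnorm p u3)"
    using lp_add(1)[OF u2(1) u3(1) p] lpnorm_add_le[OF u2(1) u3(1) p_ge1] by auto
  have "lpnorm p (\<lambda>x. u1 x + (u2 x + u3 x)) \<le> 4 * (lpnorm p u1 + lpnorm p (\<lambda>x. u2 x + u3 x))"
    using lpnorm_add_le[OF u1(1) u23(1) p_ge1] .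
  also have "\<dots> \<le> (20 * \<nu> + 16 * \<eta>) * lpnorm p f"
    using u1(2) u23(2) u2(2) u3(2) by (simp add: algebra_simps)
  finally show "(\<lambda>x. Mop (p-1) I \<phi> A f x - A f x) \<in> lp p \<and>
      lpnorm p (\<lambda>x. Mop (p-1) I \<phi> A f x - A f x) \<le> (20 * \<nu> + 16 * \<eta>) * lpnorm p f"
    unfolding eq using lp_add(1)[OF u1(1) u23(1) p] by simp
qed

end

section \<open>Convergence of the averaging maps\<close>

lemma metric_pu_weights:
  assumes "metric_pu p I \<phi>" "1 \<le> p"
  shows "pu_weights p I \<phi>" "\<exists>N. \<forall>x. card (nz_support I \<phi> x) \<le> N"
  using assms unfolding metric_pu_def pu_weights_def by blast+

text \<open>M_n(A) \<rightarrow> A in norm: approximate A within \<epsilon> by a band operator B of propagation R; for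
  n \<ge> R the (n, 1/n)-variation makes M_n(B) - B of norm O(1/n), and M_n(A - B) has norm \<le> \<epsilon>.\<close>
lemma Mop_tendsto:
  fixes I :: "nat \<Rightarrow> 'i set" and \<phi> :: "nat \<Rightarrow> 'i \<Rightarrow> 'x::metric_space \<Rightarrow> real"
    and A :: "('x \<Rightarrow> 'e::real_normed_vector) \<Rightarrow> ('x \<Rightarrow> 'e)"
  assumes bg: "bounded_geometry TYPE('x)" and p: "1 \<le> p"
    and weights: "\<And>n. n \<ge> 1 \<Longrightarrow> pu_weights p (I n) (\<phi> n)"
    and var: "\<And>n. n \<ge> 1 \<Longrightarrow> has_variation p (I n) (\<phi> n) (real n) (1 / real n)"
    and A: "A \<in> Ap p"
  shows "(\<lambda>n. opnorm p (\<lambda>f x. Mop (p-1) (I n) (\<phi> n) A f x - A f x)) \<longlonglongrightarrow> 0"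
proof (rule LIMSEQ_I)
  fix e :: real assume e: "0 < e"
  obtain B where B: "band_op p B" "opnorm p (\<lambda>f x. A f x - B f x) < e / 40"
    using Ap_approx[OF A] e by (metis divide_pos_pos zero_less_numeral)
  obtain b C R K where bm: "band_matrix p b C R B K" using band_opE[OF B(1) bg p] .
  define \<nu> where "\<nu> = opnorm p (\<lambda>f x. A f x - B f x)"
  define Z where "Z = C * real K powr (1 + 1/p)"
  have AB: "op_bound p (\<lambda>f x. A f x - B f x) \<nu>" "0 \<le> \<nu>"
    using Ap_minus_band_bound[OF A bm] opnorm_nonneg by (auto simp: \<nu>_def)
  have Z: "0 \<le> Z" using band_matrix.entry_bound_nonneg[OF bm] by (simp add: Z_def)
  obtain N0 :: nat where N0: "max R (32 * Z / e) < N0" using reals_Archimedean2 by blast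
  show "\<exists>no. \<forall>n\<ge>no. norm (opnorm p (\<lambda>f x. Mop (p-1) (I n) (\<phi> n) A f x - A f x) - 0) < e"
  proof (intro exI allI impI)
    fix n assume n: "N0 \<le> n"
    have "0 \<le> 32 * Z / e" using Z e by simp
    then have n1: "1 \<le> n" and Rn: "R \<le> real n" and Zn: "32 * Z / e < real n"
      using N0 n by linarith+
    interpret pu_band p "I n" "\<phi> n" b C R B K by (rule pu_band.intro[OF weights[OF n1] bm])
    have "op_bound p (\<lambda>f x. Mop (p-1) (I n) (\<phi> n) B f x - B f x) (1 / real n * Z)"
      using Mop_band_close[OF var[OF n1] Rn] n1 by (simp add: Z_def mult.assoc)
    from Mop_minus_id_bound[OF AB this]
    have bound: "op_bound p (\<lambda>f x. Mop (p-1) (I n) (\<phi> n) A f x - A f x) (20 * \<nu> + 16 * (Z / n))"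
      by simp
    have "16 * (Z / n) < e / 2" using Zn e n1 by (simp add: field_simps)
    moreover have "20 * \<nu> < e / 2" using B(2) by (simp add: \<nu>_def)
    ultimately show "norm (opnorm p (\<lambda>f x. Mop (p-1) (I n) (\<phi> n) A f x - A f x) - 0) < e"
      using opnorm_le[OF bound] opnorm_nonneg[OF bound] AB(2) Z by simp
  qed
qed

text \<open>Strong discreteness and property A only serve to guarantee that partitions
  as in the hypotheses exist; the argument itself does not use them.\<close>
theorem corollary6p5:
  fixes p q :: real
    and I :: "nat \<Rightarrow> 'i set"
    and \<phi> :: "nat \<Rightarrow> 'i \<Rightarrow> 'x::metric_space \<Rightarrow> real"
  assumes sd: "strongly_discrete TYPE('x)"
    and bg: "bounded_geometry TYPE('x)"
    and pA: "property_A TYPE('x) p"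
    and E_nontriv: "\<exists>e::'e::banach. e \<noteq> 0"
    and p: "1 < p" and q: "1/p + 1/q = 1"
    and pu: "\<And>n. n \<ge> 1 \<Longrightarrow> metric_pu p (I n) (\<phi> n)"
    and var: "\<And>n. n \<ge> 1 \<Longrightarrow> has_variation p (I n) (\<phi> n) (real n) (1 / real n)"
  shows "(\<forall>n\<ge>1.
            (\<forall>A\<in>(Ap p :: (('x \<Rightarrow> 'e) \<Rightarrow> ('x \<Rightarrow> 'e)) set).
               (\<forall>f\<in>lp p.
                  ((\<lambda>F. lpnorm p (\<lambda>x. Mop (p/q) (I n) (\<phi> n) A f x
                                        - (\<Sum>i\<in>F. Mterm (p/q) (\<phi> n) A i f x))) \<longlongrightarrow> 0)
                  (finite_subsets_at_top (I n)))
             \<and> Mop (p/q) (I n) (\<phi> n) A \<in> Ap p)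
          \<and> (\<forall>A\<in>(Ap p :: (('x \<Rightarrow> 'e) \<Rightarrow> ('x \<Rightarrow> 'e)) set). \<forall>B\<in>Ap p. \<forall>a b::real. \<forall>f\<in>lp p.
               Mop (p/q) (I n) (\<phi> n) (\<lambda>g x. a *\<^sub>R A g x + b *\<^sub>R B g x) f
                 = (\<lambda>x. a *\<^sub>R Mop (p/q) (I n) (\<phi> n) A f x + b *\<^sub>R Mop (p/q) (I n) (\<phi> n) B f x))
          \<and> Sup {opnorm p (Mop (p/q) (I n) (\<phi> n) A) | A.
                   A \<in> (Ap p :: (('x \<Rightarrow> 'e) \<Rightarrow> ('x \<Rightarrow> 'e)) set) \<and> opnorm p A \<le> 1} = 1)
       \<and> (\<forall>A\<in>(Ap p :: (('x \<Rightarrow> 'e) \<Rightarrow> ('x \<Rightarrow> 'e)) set).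
            (\<lambda>n. opnorm p (\<lambda>f x. Mop (p/q) (I n) (\<phi> n) A f x - A f x)) \<longlonglongrightarrow> 0)"
proof -
  have p1: "1 \<le> p" using p by simp
  have "p / q = p * (1 - 1/p)" using q by (simp add: divide_inverse flip: eq_diff_eq')
  then have pq: "p / q = p - 1" using p by (simp add: right_diff_distrib)
  note weights = metric_pu_weights[OF pu p1]
  show ?thesis
    unfolding pq
    by (intro conjI ballI allI impI Mop_tendsto[OF bg p1 weights(1) var]
          pu_weights.averaging_map_properties[OF weights(1) bg E_nontriv weights(2)])
qed

end
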